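(* Let $\mathcal{G}=(\mathcal{V},\mathcal{E})$ be an undirected connected graph with $\mathcal{V}=\{1,\dots,m\}$, let $\mathcal{X}=\{u\in\mathbb{R}^n:u\ge0,\ \mathbf{1}_n^\top u=1\}$ be the probability simplex, and consider $$\min_{\bm{x}\in\mathcal{X}^m}\ \sum_{i\in\mathcal{V}}f_i(x_i)\quad\text{s.t.}\quad(P\otimes I_n)\bm{x}=\bm{x}.$$ Let $\mathcal{D}=\{u\in\mathbb{R}^n:u>0\}$ and let $\phi=\varphi_i$ ($i\in\mathcal{V}$) be the negative entropy $\phi(u)=\sum_{k=1}^n u_k\ln u_k$ on $\mathcal{D}$. Assume: each $f_i:\mathbb{R}^n\to\mathbb{R}\cup\{+\infty\}$ is closed, proper and convex; there is $(\bm{x}^\star,\bm{\nu}^\star)$ such that for each $i$, $\sum_jP_{ij}x_j^\star=x_i^\star$ and there is $g_i\in N_{\mathcal{X}}(x_i^\star)$ with $-\nu_i^\star+\sum_jP_{ij}\nu_j^\star-g_i\in\partial f_i(x_i^\star)$; $\phi$ satisfies $B_\phi(u,v)\ge\frac{\mu}{2}\|u-v\|_p^2$ on $\mathcal{X}\cap\mathcal{D}$ for some $\mu>0$, $p\ge1$; $P\in\mathbb{R}^{m\times m}$ is symmetric, stochastic, irreducible and positive semidefinite with $P_{ij}>0$ only if $j\in\mathcal{N}(i)$. Suppose moreover that $\|g\|_2^2\le M_0$ for all $g\in\partial f_i(x_i^\star)$ and all $i\in\mathcal{V}$, for some $M_0\ge0$. Let $\rho>0$, $\tau=\rho/2$,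 $\gamma=1/4$, $\delta_1,\dots,\delta_m\ge0$, $\delta_{\max}=\max_i\delta_i$, $\bm{\nu}^{(0)}=0$, $\bm{x}^{(0)}=\mathbf{1}_m\otimes(\frac1n\mathbf{1}_n)$, and let $\{\bm{y}^{(t)},\bm{x}^{(t)},\bm{\nu}^{(t)}\}$ be generated by: for $t=0,1,\dots$ and each $i\in\mathcal{V}$, $$y_i^{(t)}=\operatorname*{argmin}_{y_i\in\mathcal{X}}\sum_{j\in\mathcal{V}}P_{ij}B_\phi(y_i,x_j^{(t)}),$$ $$x_i^{(t+1)}=\operatorname*{argmin}_{x_i\in\mathcal{X}}\ f_i(x_i)+\Big\langle x_i,\nu_i^{(t)}-\sum_{j\in\mathcal{V}}P_{ij}\nu_j^{(t)}\Big\rangle+\rho B_\phi(x_i,y_i^{(t)})+\delta_iB_{\varphi_i}(x_i,x_i^{(t)}),$$ $$\nu_i^{(t+1)}=\nu_i^{(t)}+\tau x_i^{(t+1)}-\tau\sum_{j\in\mathcal{V}}P_{ij}x_j^{(t+1)}.$$ With $\bar{\bm{x}}^{(T)}=\frac1T\sum_{t=1}^T\bm{x}^{(t)}$ and $\lambda_2(P)$ the eigenvalue of $P$ of second largest magnitude, $$\sum_{i\in\mathcal{V}}f_i(\bar x_i^{(T)})-\sum_{i\in\mathcal{V}}f_i(x_i^\star)\le\frac{m(\rho+\delta_{\max})\ln n}{T},$$ $$\frac12\big\|((I_m-P)\otimes I_n)\bar{\bm{x}}^{(T)}\big\|_2^2\le\frac{4mM_0}{\rho^2(1-\lambda_2(P))^2T}+\frac{4m(\rho+\delta_{\max})\ln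 n}{\rho T}.$$
   Context: $\mathcal{N}(i)$ is the set of neighbors of $i$; $\mathbf{1}_k$ is the all-ones vector in $\mathbb{R}^k$; $\otimes$ is the Kronecker product. $N_{\mathcal{X}}(u)=\{g:\langle g,u-v\rangle\ge0\ \forall v\in\mathcal{X}\}$ is the normal cone. $B_\psi(u,v)=\psi(u)-\psi(v)-\langle\nabla\psi(v),u-v\rangle$ is the Bregman divergence. Eigenvalues of $P$ are ordered by nonincreasing magnitude $|\lambda_1(P)|\ge|\lambda_2(P)|\ge\dots$, with $\lambda_1(P)=1$. *)

theory Defs
  imports "HOL-Analysis.Analysis" "HOL-Library.Extended_Real" "HOL-Computational_Algebra.Polynomial"
    "HOL-Library.Multiset"
begin

definition prob_simplex :: "(real^'n) set" where
  "prob_simplex = {u. (\<forall>k. u$k \<ge> 0) \<and> (\<Sum>k\<in>UNIV. u$k) = 1}"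

definition posorth :: "(real^'n) set" where
  "posorth = {u. \<forall>k. u$k > 0}"

text \<open>Negative entropy (note ln 0 = 0 in Isabelle, so 0 ln 0 = 0) and its gradient on D.\<close>
definition negent :: "real^'n \<Rightarrow> real" where
  "negent u = (\<Sum>k\<in>UNIV. u$k * ln (u$k))"

definition negent_grad :: "real^'n \<Rightarrow> real^'n" where
  "negent_grad v = (\<chi> k. ln (v$k) + 1)"

definition bregman :: "real^'n \<Rightarrow> real^'n \<Rightarrow> real" where
  "bregman u v = negent u - negent v - negent_grad v \<bullet> (u - v)"

definition pnorm :: "real \<Rightarrow> real^'n \<Rightarrow> real" where
  "pnorm p u = (\<Sum>k\<in>UNIV. \<bar>u$k\<bar> powr p) powr (1/p)"

definition normal_cone :: "(real^'n) set \<Rightarrow> real^'n \<Rightarrow> (real^'n) set" where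
  "normal_cone X u = (if u \<in> X then {g. \<forall>v\<in>X. g \<bullet> (u - v) \<ge> 0} else {})"

definition epigraph :: "(real^'n \<Rightarrow> ereal) \<Rightarrow> ((real^'n) \<times> real) set" where
  "epigraph f = {(x, r). f x \<le> ereal r}"

definition proper_fun :: "(real^'n \<Rightarrow> ereal) \<Rightarrow> bool" where
  "proper_fun f \<longleftrightarrow> (\<forall>x. f x \<noteq> -\<infinity>) \<and> (\<exists>x. f x \<noteq> \<infinity>)"

definition convex_fun :: "(real^'n \<Rightarrow> ereal) \<Rightarrow> bool" where
  "convex_fun f \<longleftrightarrow> convex (epigraph f)"

definition closed_fun :: "(real^'n \<Rightarrow> ereal) \<Rightarrow> bool" where
  "closed_fun f \<longleftrightarrow> closed (epigraph f)"

definition subdiff :: "(real^'n \<Rightarrow> ereal) \<Rightarrow> real^'n \<Rightarrow> (real^'n) set" where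
  "subdiff f x = {g. \<bar>f x\<bar> \<noteq> \<infinity> \<and> (\<forall>y. f y \<ge> f x + ereal (g \<bullet> (y - x)))}"

definition symmetric_mat :: "real^'m^'m \<Rightarrow> bool" where
  "symmetric_mat P \<longleftrightarrow> (\<forall>i j. P$i$j = P$j$i)"

definition stochastic_mat :: "real^'m^'m \<Rightarrow> bool" where
  "stochastic_mat P \<longleftrightarrow> (\<forall>i j. P$i$j \<ge> 0) \<and> (\<forall>i. (\<Sum>j\<in>UNIV. P$i$j) = 1)"

definition irreducible_mat :: "real^'m^'m \<Rightarrow> bool" where
  "irreducible_mat P \<longleftrightarrow> (\<forall>i j. (i, j) \<in> {(a, b). P$a$b > 0}\<^sup>+)"

definition psd_mat :: "real^'m^'m \<Rightarrow> bool" where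
  "psd_mat P \<longleftrightarrow> (\<forall>x. x \<bullet> (P *v x) \<ge> 0)"

definition charpoly :: "real^'m^'m \<Rightarrow> real poly" where
  "charpoly P = det (\<chi> i j. (if i = j then [:0, 1:] else 0) - [:P$i$j:])"

definition eigenvalues_by_magnitude :: "real^'m^'m \<Rightarrow> real list" where
  "eigenvalues_by_magnitude P =
     sort_key (\<lambda>x. - \<bar>x\<bar>) (sorted_list_of_multiset (proots (charpoly P)))"

definition lambda2 :: "real^'m^'m \<Rightarrow> real" where
  "lambda2 P = eigenvalues_by_magnitude P ! 1"

definition undirected_graph :: "('m \<Rightarrow> 'm \<Rightarrow> bool) \<Rightarrow> bool" where
  "undirected_graph E \<longleftrightarrow> (\<forall>i j. E i j \<longleftrightarrow> E j i) \<and> (\<forall>i. \<not> E i i)"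

definition connected_graph :: "('m \<Rightarrow> 'm \<Rightarrow> bool) \<Rightarrow> bool" where
  "connected_graph E \<longleftrightarrow> (\<forall>i j. (i, j) \<in> {(a, b). E a b}\<^sup>*)"

definition neighbors :: "('m \<Rightarrow> 'm \<Rightarrow> bool) \<Rightarrow> 'm \<Rightarrow> 'm set" where
  "neighbors E i = {j. E i j}"

end

(*
  The objective bound is an ergodic mirror-descent argument. The x-update is an entropic proximal
  step whose minimiser stays in the open simplex (entropy pushes away from the boundary faster
  than any linear term) and therefore obeys a three-point inequality; the y-update is the Bregman
  barycentre of the neighbours' iterates and obeys a Pythagorean identity. Combined with the dual
  update and positive semidefiniteness of P, this gives, for every test dual vector V, the descent
  of  2 tau sum_i (rho + delta_i) B(x*, x_i) + |nu - V|^2  by  2 tau (objective gap + <(I - P) x, V>).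
  Telescoping, Jensen's inequality and B(x*, uniform) <= ln n bound the averaged iterate, and V = 0
  gives the optimality gap.

  For the consensus violation, the KKT conditions provide a dual certificate V0: the centred
  subgradients have zero sum, hence equal (I - P) V0 with |V0| <= sqrt (m M0) / (1 - lambda2 P) by
  the spectral gap of P, while their mean is an outer normal of the simplex. This bounds the
  objective gap from below by -<(I - P) xbar, V0>; testing with V = V0 + kappa (I - P) xbar and
  optimising kappa bounds the disagreement.
*)
theory Submission
  imports Defs
begin

section \<open>Negative entropy on the probability simplex\<close>

definition xlnx_bregman :: "real \<Rightarrow> real \<Rightarrow> real" where
  "xlnx_bregman u v = u * ln u - v * ln v - (ln v + 1) * (u - v)"

lemma bregman_eq_sum_xlnx_bregman: "bregman u v = (\<Sum>k\<in>UNIV. xlnx_bregman (u$k) (v$k))"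
  unfolding bregman_def negent_def negent_grad_def xlnx_bregman_def inner_vec_def
  by (simp add: sum_subtractf[symmetric])

lemma ln_minus_id_mono:
  fixes a b :: real
  assumes "0 < a" "a \<le> b" "b \<le> 1"
  shows "ln a - a \<le> ln b - b"
proof (rule DERIV_nonneg_imp_increasing_open[OF assms(2)])
  fix x assume "a < x" "x < b"
  then have "0 < x" "x \<le> 1" using assms by auto
  then show "\<exists>y. ((\<lambda>t. ln t - t) has_real_derivative y) (at x) \<and> 0 \<le> y"
    by (intro exI[of _ "1/x - 1"]) (auto intro!: derivative_eq_intros simp: field_simps)
next
  show "continuous_on {a..b} (\<lambda>t. ln t - t)"
    using assms by (intro continuous_intros) auto
qed

text \<open>On \<open>(0, 1]\<close> the second derivative \<open>1/u\<close> of \<open>u ln u\<close> is at least 1.\<close>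
lemma xlnx_bregman_ge_sq:
  fixes u v :: real
  assumes u: "0 \<le> u" "u \<le> 1" and v: "0 < v" "v \<le> 1"
  shows "(u - v)^2 / 2 \<le> xlnx_bregman u v"
proof -
  define g where "g u = xlnx_bregman u v - (u - v)^2 / 2" for u
  have cont: "continuous_on {a..b} g" if "0 < a" for a b
    unfolding g_def xlnx_bregman_def using that by (intro continuous_intros) auto
  have der: "(g has_real_derivative (ln x - x) - (ln v - v)) (at x)" if "0 < x" for x
    unfolding g_def xlnx_bregman_def using that
    by (auto intro!: derivative_eq_intros simp: field_simps)
  have "g v \<le> g u"
  proof (cases "v \<le> u")
    case True
    show ?thesis
    proof (rule DERIV_nonneg_imp_increasing_open[OF True _ cont[OF v(1)]])
      fix x assume "v < x" "x < u"
      then show "\<exists>y. (g has_real_derivative y) (at x) \<and> 0 \<le> y"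
        using der[of x] ln_minus_id_mono[of v x] v u by (intro exI) auto
    qed
  next
    case False
    show ?thesis
    proof (cases "u = 0")
      case True
      then show ?thesis using v by (simp add: g_def xlnx_bregman_def power2_eq_square algebra_simps)
    next
      case False
      with u have "0 < u" by simp
      show ?thesis
      proof (rule DERIV_nonpos_imp_decreasing_open[of u v g])
        fix x assume "u < x" "x < v"
        then show "\<exists>y. (g has_real_derivative y) (at x) \<and> y \<le> 0"
          using der[of x] ln_minus_id_mono[of x v] v \<open>0 < u\<close> by (intro exI) auto
      qed (use \<open>\<not> v \<le> u\<close> cont[OF \<open>0 < u\<close>] in auto)
    qed
  qed
  then show ?thesis by (simp add: g_def xlnx_bregman_def)
qed

lemma xlnx_bregman_le_chi2:
  fixes u v :: real
  assumes u: "0 \<le> u" and v: "0 < v"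
  shows "xlnx_bregman u v \<le> (u - v)^2 / v"
proof (cases "u = 0")
  case True
  then show ?thesis using v by (simp add: xlnx_bregman_def power2_eq_square field_simps)
next
  case False
  with u have "0 < u" by simp
  have "u * ln (u / v) \<le> u * (u / v - 1)"
    using \<open>0 < u\<close> v by (intro mult_left_mono ln_le_minus_one) auto
  then show ?thesis using \<open>0 < u\<close> v
    by (simp add: xlnx_bregman_def ln_div power2_eq_square field_simps)
qed

lemma prob_simplex_nonneg: "u \<in> prob_simplex \<Longrightarrow> 0 \<le> u$k"
  by (simp add: prob_simplex_def)

lemma prob_simplex_sum: "u \<in> prob_simplex \<Longrightarrow> (\<Sum>k\<in>UNIV. u$k) = 1"
  by (simp add: prob_simplex_def)

lemma prob_simplex_le_1:
  assumes "u \<in> prob_simplex"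
  shows "u$k \<le> 1"
proof -
  have "u$k \<le> (\<Sum>k\<in>UNIV. u$k)"
    by (rule member_le_sum) (auto simp: prob_simplex_nonneg[OF assms])
  then show ?thesis using prob_simplex_sum[OF assms] by simp
qed

lemma convex_prob_simplex: "convex prob_simplex"
  unfolding convex_def prob_simplex_def
  by (auto simp: sum.distrib sum_distrib_left[symmetric])

lemma uniform_in_prob_simplex:
  "((\<chi> k. 1 / real CARD('n)) :: real^'n) \<in> prob_simplex \<inter> posorth"
  by (simp add: prob_simplex_def posorth_def)

lemma convex_comb_in_posorth:
  assumes "u \<in> prob_simplex" "v \<in> posorth" "0 < s" "s \<le> 1"
  shows "(1 - s) *\<^sub>R u + s *\<^sub>R v \<in> posorth"
  using assms prob_simplex_nonneg[OF assms(1)]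
  by (auto simp: posorth_def intro!: add_nonneg_pos)

lemma power2_norm_real_vec: "(norm (x::real^'n))^2 = (\<Sum>k\<in>UNIV. (x$k)^2)"
  unfolding power2_norm_eq_inner by (simp add: inner_vec_def power2_eq_square)

lemma bregman_ge_half_sqdist:
  assumes "u \<in> prob_simplex" "v \<in> prob_simplex" "v \<in> posorth"
  shows "(norm (u - v))^2 / 2 \<le> bregman u v"
proof -
  have "(u$k - v$k)^2 / 2 \<le> xlnx_bregman (u$k) (v$k)" for k
    using assms by (intro xlnx_bregman_ge_sq) (auto simp: prob_simplex_nonneg prob_simplex_le_1 posorth_def)
  then show ?thesis
    unfolding power2_norm_real_vec bregman_eq_sum_xlnx_bregman sum_divide_distrib by (intro sum_mono) simp
qed

lemma bregman_nonneg:
  assumes "u \<in> prob_simplex" "v \<in> prob_simplex" "v \<in> posorth"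
  shows "0 \<le> bregman u v"
  using bregman_ge_half_sqdist[OF assms] by (rule order_trans[rotated]) simp

lemma bregman_le_chi2:
  assumes "\<And>k. 0 \<le> u$k" "v \<in> posorth"
  shows "bregman u v \<le> (\<Sum>k\<in>UNIV. (u$k - v$k)^2 / v$k)"
  unfolding bregman_eq_sum_xlnx_bregman using assms
  by (intro sum_mono xlnx_bregman_le_chi2) (auto simp: posorth_def)

lemma bregman_uniform_le_ln:
  assumes "c \<in> prob_simplex"
  shows "bregman c ((\<chi> k. 1 / real CARD('n)) :: real^'n) \<le> ln (real CARD('n))"
proof -
  let ?n = "real CARD('n)"
  have "bregman c (\<chi> k. 1 / ?n) = (\<Sum>k\<in>UNIV. xlnx_bregman (c$k) (1/?n))"
    by (simp add: bregman_eq_sum_xlnx_bregman)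
  also have "\<dots> = negent c - (\<Sum>k\<in>(UNIV::'n set). 1/?n * ln (1/?n))
      - (ln (1/?n) + 1) * ((\<Sum>k\<in>UNIV. c$k) - (\<Sum>k\<in>(UNIV::'n set). 1/?n))"
    by (simp add: xlnx_bregman_def negent_def sum_subtractf sum_distrib_left right_diff_distrib)
  also have "\<dots> = negent c + ln ?n"
    using prob_simplex_sum[OF assms] by (simp add: ln_div)
  also have "negent c \<le> 0"
    unfolding negent_def using prob_simplex_nonneg[OF assms] prob_simplex_le_1[OF assms]
    by (intro sum_nonpos) (metis ln_le_zero_iff mult_nonneg_nonpos mult_zero_left order_less_le)
  finally show ?thesis by simp
qed

lemma power2_norm_diff_prob_simplex_le_2:
  assumes "u \<in> prob_simplex" "v \<in> prob_simplex"
  shows "(norm (u - v))^2 \<le> 2"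
proof -
  have "(u$k - v$k)^2 \<le> u$k + v$k" for k
  proof -
    have "0 \<le> u$k" "u$k \<le> 1" "0 \<le> v$k" "v$k \<le> 1"
      using assms prob_simplex_nonneg prob_simplex_le_1 by auto
    then have "\<bar>u$k - v$k\<bar> * \<bar>u$k - v$k\<bar> \<le> \<bar>u$k - v$k\<bar> * 1"
      by (intro mult_left_mono) auto
    then show ?thesis using \<open>0 \<le> u$k\<close> \<open>0 \<le> v$k\<close> by (simp add: power2_eq_square abs_mult_self_eq)
  qed
  then have "(norm (u - v))^2 \<le> (\<Sum>k\<in>UNIV. u$k + v$k)"
    unfolding power2_norm_real_vec by (intro sum_mono) simp
  also have "\<dots> = 2" using assms by (simp add: sum.distrib prob_simplex_sum)
  finally show ?thesis .
qed

lemma bregman_eq_negent_minus_affine: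
  "bregman z y = negent z - negent_grad y \<bullet> z + (negent_grad y \<bullet> y - negent y)"
  by (simp add: bregman_def inner_diff_right)

lemma convex_posorth: "convex posorth"
proof (rule convexI)
  fix x y :: "real^'n" and u v :: real
  assume "x \<in> posorth" "y \<in> posorth" "0 \<le> u" "0 \<le> v" "u + v = 1"
  moreover have "0 < u \<or> 0 < v" using \<open>0 \<le> u\<close> \<open>u + v = 1\<close> by linarith
  ultimately show "u *\<^sub>R x + v *\<^sub>R y \<in> posorth"
    by (auto simp: posorth_def) (smt (verit) mult_nonneg_nonneg mult_pos_pos)+
qed

section \<open>Convex extended-real functions\<close>

lemma convex_funD:
  assumes "convex_fun f" "f x \<le> ereal a" "f z \<le> ereal c" "0 \<le> s" "s \<le> 1"
  shows "f ((1 - s) *\<^sub>R x + s *\<^sub>R z) \<le> ereal ((1 - s) * a + s * c)"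
proof -
  have "(1 - s) *\<^sub>R (x, a) + s *\<^sub>R (z, c) \<in> epigraph f"
    using assms by (intro convexD[of "epigraph f"]) (auto simp: convex_fun_def epigraph_def)
  then show ?thesis by (simp add: epigraph_def)
qed

lemma convex_fun_sum_le:
  assumes "convex_fun f" "finite A" "sum a A = 1" "\<And>t. t \<in> A \<Longrightarrow> 0 \<le> a t"
    "\<And>t. t \<in> A \<Longrightarrow> f (x t) \<le> ereal (r t)"
  shows "f (\<Sum>t\<in>A. a t *\<^sub>R x t) \<le> ereal (\<Sum>t\<in>A. a t * r t)"
proof -
  have "(\<Sum>t\<in>A. a t *\<^sub>R (x t, r t)) \<in> epigraph f"
    using assms by (intro convex_sum) (auto simp: convex_fun_def epigraph_def)
  moreover have "(\<Sum>t\<in>A. a t *\<^sub>R (x t, r t)) = ((\<Sum>t\<in>A. a t *\<^sub>R x t), (\<Sum>t\<in>A. a t * r t))"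
    by (simp add: prod_eq_iff fst_sum snd_sum)
  ultimately show ?thesis by (simp add: epigraph_def)
qed

lemma convex_fun_dom:
  fixes f :: "real^'n \<Rightarrow> ereal"
  assumes "convex_fun f"
  shows "convex {x. f x \<noteq> \<infinity>}"
proof (rule convexI)
  fix x y :: "real^'n" and u v :: real
  assume x: "x \<in> {x. f x \<noteq> \<infinity>}" and y: "y \<in> {x. f x \<noteq> \<infinity>}"
    and uv: "0 \<le> u" "0 \<le> v" "u + v = 1"
  have "f x \<le> ereal (real_of_ereal (f x))" "f y \<le> ereal (real_of_ereal (f y))"
    using x y by (cases "f x"; cases "f y"; auto)+
  from convex_funD[OF assms this, of v] uv
  show "u *\<^sub>R x + v *\<^sub>R y \<in> {x. f x \<noteq> \<infinity>}"
    by (auto simp: eq_diff_eq[symmetric])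
qed

lemma subdiff_imp_finite: "g \<in> subdiff f x \<Longrightarrow> f x = ereal (real_of_ereal (f x))"
  by (cases "f x") (auto simp: subdiff_def)

lemma subgradient_ineq:
  assumes "g \<in> subdiff f x" "f y = ereal Fy" "f x = ereal Fx"
  shows "Fx + g \<bullet> (y - x) \<le> Fy"
  using assms by (auto simp: subdiff_def dest!: spec[of _ y])

lemma nonpos_if_le_small_multiples:
  fixes D K :: real
  assumes "\<And>s. 0 < s \<Longrightarrow> s \<le> 1 \<Longrightarrow> D \<le> s * K"
  shows "D \<le> 0"
proof (rule field_le_epsilon)
  fix e :: real assume "0 < e"
  define s where "s = min 1 (e / (\<bar>K\<bar> + 1))"
  have s: "0 < s" "s \<le> 1" using \<open>0 < e\<close> by (auto simp: s_def)
  have "s * K \<le> s * \<bar>K\<bar>" using s by (intro mult_left_mono) auto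
  also have "\<dots> \<le> e / (\<bar>K\<bar> + 1) * \<bar>K\<bar>" by (intro mult_right_mono) (auto simp: s_def)
  also have "\<dots> \<le> e" using \<open>0 < e\<close> by (simp add: field_simps)
  finally show "D \<le> 0 + e" using assms[OF s] by simp
qed

lemma subdiff_unbounded_if_supported:
  assumes g0: "g0 \<in> subdiff f x" and "a \<noteq> 0"
    and supp: "\<And>y. f y \<noteq> \<infinity> \<Longrightarrow> a \<bullet> y \<le> a \<bullet> x"
  shows "\<not> bounded (subdiff f x)"
proof
  have sub: "g0 + c *\<^sub>R a \<in> subdiff f x" if "0 \<le> c" for c
  proof -
    have "f x + ereal ((g0 + c *\<^sub>R a) \<bullet> (y - x)) \<le> f y" for y
    proof (cases "f y = \<infinity>")
      case False
      then have "c * (a \<bullet> (y - x)) \<le> 0"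
        using supp[of y] that by (simp add: inner_diff_right mult_nonneg_nonpos)
      then have "f x + ereal ((g0 + c *\<^sub>R a) \<bullet> (y - x)) \<le> f x + ereal (g0 \<bullet> (y - x))"
        by (intro add_left_mono) (simp add: inner_add_left)
      also have "\<dots> \<le> f y" using g0 by (simp add: subdiff_def)
      finally show ?thesis .
    qed simp
    then show ?thesis using g0 by (simp add: subdiff_def)
  qed
  assume "bounded (subdiff f x)"
  then obtain B where B: "\<And>g. g \<in> subdiff f x \<Longrightarrow> norm g \<le> B" by (auto simp: bounded_iff)
  define c where "c = (B + norm g0 + 1) / norm a"
  have "0 \<le> B" using B[OF g0] norm_ge_zero order_trans by blast
  then have "0 \<le> c" by (simp add: c_def)
  have "norm (c *\<^sub>R a) = B + norm g0 + 1"
    using \<open>a \<noteq> 0\<close> \<open>0 \<le> B\<close> by (simp add: c_def)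
  moreover have "norm (c *\<^sub>R a) \<le> norm (g0 + c *\<^sub>R a) + norm g0"
    using norm_triangle_ineq4[of "g0 + c *\<^sub>R a" g0] by simp
  ultimately show False using B[OF sub[OF \<open>0 \<le> c\<close>]] by simp
qed

text \<open>A bounded nonempty subdifferential at a point of the simplex forces the domain to reach
  the relative interior: otherwise a hyperplane separating the domain from the open simplex
  supports the domain at that point and adds an unbounded ray to the subdifferential.\<close>
lemma dom_meets_pos_simplex:
  fixes f :: "real^'n \<Rightarrow> ereal"
  assumes cf: "convex_fun f" and xS: "x \<in> prob_simplex"
    and ne: "subdiff f x \<noteq> {}" and bd: "bounded (subdiff f x)"
  shows "\<exists>w \<in> prob_simplex \<inter> posorth. f w \<noteq> \<infinity>"
proof (rule ccontr)
  assume nex: "\<not> ?thesis"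
  define unif :: "real^'n" where "unif = (\<chi> k. 1 / real CARD('n))"
  obtain g0 where g0: "g0 \<in> subdiff f x" using ne by blast
  have "f x \<noteq> \<infinity>" using subdiff_imp_finite[OF g0] by (metis PInfty_neq_ereal(1))
  moreover have "unif \<in> prob_simplex \<inter> posorth" unfolding unif_def by (rule uniform_in_prob_simplex)
  moreover have "{y. f y \<noteq> \<infinity>} \<inter> (prob_simplex \<inter> posorth) = {}" using nex by auto
  ultimately obtain a b where "a \<noteq> 0" and aD: "\<And>y. f y \<noteq> \<infinity> \<Longrightarrow> a \<bullet> y \<le> b"
    and aT: "\<And>y. y \<in> prob_simplex \<inter> posorth \<Longrightarrow> b \<le> a \<bullet> y"
    using separating_hyperplane_sets[OF convex_fun_dom[OF cf] convex_Int[OF convex_prob_simplex convex_posorth]]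
    by blast
  have "b - a \<bullet> x \<le> 0"
  proof (rule nonpos_if_le_small_multiples)
    fix s :: real assume s: "0 < s" "s \<le> 1"
    have "(1 - s) *\<^sub>R x + s *\<^sub>R unif \<in> prob_simplex \<inter> posorth"
      using convexD[OF convex_prob_simplex xS, of unif "1 - s" s] convex_comb_in_posorth[OF xS _ s, of unif]
        \<open>unif \<in> prob_simplex \<inter> posorth\<close> s by auto
    from aT[OF this] show "b - a \<bullet> x \<le> s * (a \<bullet> (unif - x))"
      by (simp add: inner_add_right inner_diff_right algebra_simps)
  qed
  then have "\<And>y. f y \<noteq> \<infinity> \<Longrightarrow> a \<bullet> y \<le> a \<bullet> x" using aD by fastforce
  from subdiff_unbounded_if_supported[OF g0 \<open>a \<noteq> 0\<close> this] bd show False by blast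
qed

section \<open>The entropic proximal step\<close>

definition is_entropic_prox :: "(real^'n \<Rightarrow> ereal) \<Rightarrow> real^'n \<Rightarrow> real \<Rightarrow> real^'n \<Rightarrow> bool" where
  "is_entropic_prox f b \<kappa> u \<longleftrightarrow> u \<in> prob_simplex \<and>
     (\<forall>z\<in>prob_simplex. f u + ereal (u \<bullet> b + \<kappa> * negent u) \<le> f z + ereal (z \<bullet> b + \<kappa> * negent z))"

lemma entropic_prox_finite:
  assumes "proper_fun f" "is_entropic_prox f b \<kappa> u" "w \<in> prob_simplex" "f w \<noteq> \<infinity>"
  shows "f u = ereal (real_of_ereal (f u))"
proof -
  have "f u + ereal (u \<bullet> b + \<kappa> * negent u) \<le> f w + ereal (w \<bullet> b + \<kappa> * negent w)"
    using assms(2,3) by (auto simp: is_entropic_prox_def)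
  then have "f u \<noteq> \<infinity>" using assms(4) by auto
  moreover have "f u \<noteq> -\<infinity>" using assms(1) by (simp add: proper_fun_def)
  ultimately show ?thesis by (cases "f u") auto
qed

lemma entropic_prox_le:
  assumes "is_entropic_prox f b \<kappa> u" "f u = ereal Fu" "z \<in> prob_simplex" "f z \<le> ereal r"
  shows "Fu + u \<bullet> b + \<kappa> * negent u \<le> r + z \<bullet> b + \<kappa> * negent z"
proof -
  have "ereal Fu + ereal (u \<bullet> b + \<kappa> * negent u) \<le> f z + ereal (z \<bullet> b + \<kappa> * negent z)"
    using assms(1-3) by (auto simp: is_entropic_prox_def)
  also have "\<dots> \<le> ereal r + ereal (z \<bullet> b + \<kappa> * negent z)" using assms(4) by (rule add_right_mono)
  finally show ?thesis by simp
qed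

lemma xlnx_convex:
  fixes a b s :: real
  assumes "0 < a" "0 < b" "0 \<le> s" "s \<le> 1"
  shows "((1 - s) * a + s * b) * ln ((1 - s) * a + s * b) \<le> (1 - s) * (a * ln a) + s * (b * ln b)"
proof -
  have "convex_on {0<..} (\<lambda>x::real. x * ln x)"
  proof (rule convex_on_realI[where f' = "\<lambda>x. ln x + 1"])
    fix x :: real assume "x \<in> {0<..}"
    then show "((\<lambda>x. x * ln x) has_real_derivative ln x + 1) (at x)"
      by (auto intro!: derivative_eq_intros)
  qed auto
  from convex_onD[OF this, of s a b] show ?thesis using assms by simp
qed

text \<open>Moving from a boundary point \<open>u\<close> of the simplex towards an interior point \<open>w\<close>
  decreases the entropy at the rate \<open>s ln s\<close>, which beats any linear growth.\<close>
lemma negent_convex_comb_le: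
  assumes uS: "u \<in> prob_simplex" and wP: "w \<in> posorth" and s: "0 < s" "s < 1"
  shows "negent ((1 - s) *\<^sub>R u + s *\<^sub>R w)
    \<le> (1 - s) * negent u + s * negent w + s * ln s * (\<Sum>k | u$k = 0. w$k)"
proof -
  have coord: "((1 - s) * u$k + s * w$k) * ln ((1 - s) * u$k + s * w$k)
      \<le> (1 - s) * (u$k * ln (u$k)) + s * (w$k * ln (w$k)) + (if u$k = 0 then s * ln s * w$k else 0)"
    for k
  proof (cases "u$k = 0")
    case True
    then show ?thesis using s wP by (simp add: posorth_def ln_mult algebra_simps)
  next
    case False
    then have "0 < u$k" using prob_simplex_nonneg[OF uS, of k] by simp
    then show ?thesis using xlnx_convex[of "u$k" "w$k" s] s wP False by (simp add: posorth_def)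
  qed
  have "negent ((1 - s) *\<^sub>R u + s *\<^sub>R w)
      \<le> (\<Sum>k\<in>UNIV. (1 - s) * (u$k * ln (u$k)) + s * (w$k * ln (w$k))
          + (if u$k = 0 then s * ln s * w$k else 0))"
    unfolding negent_def by (intro sum_mono) (simp add: coord)
  also have "\<dots> = (1 - s) * negent u + s * negent w + s * ln s * (\<Sum>k | u$k = 0. w$k)"
    by (simp add: negent_def sum.distrib sum_distrib_left sum.If_cases)
  finally show ?thesis .
qed

lemma entropic_prox_pos:
  assumes cf: "convex_fun f" and pf: "proper_fun f" and \<kappa>: "0 < \<kappa>"
    and wS: "w \<in> prob_simplex" and wP: "w \<in> posorth" and fw: "f w \<noteq> \<infinity>"
    and prox: "is_entropic_prox f b \<kappa> u"
  shows "u \<in> posorth"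
proof (rule ccontr)
  assume "u \<notin> posorth"
  have uS: "u \<in> prob_simplex" using prox by (simp add: is_entropic_prox_def)
  obtain k0 where "\<not> 0 < u$k0" using \<open>u \<notin> posorth\<close> by (auto simp: posorth_def)
  then have "u$k0 = 0" using prob_simplex_nonneg[OF uS, of k0] by simp
  define W where "W = (\<Sum>k | u$k = 0. w$k)"
  have "w$k0 \<le> W" unfolding W_def
    using \<open>u$k0 = 0\<close> wP by (intro member_le_sum) (auto simp: posorth_def less_imp_le)
  then have "0 < W" using wP unfolding posorth_def by (metis less_le_trans mem_Collect_eq)
  define Fu where "Fu = real_of_ereal (f u)"
  have fu: "f u = ereal Fu" unfolding Fu_def by (rule entropic_prox_finite[OF pf prox wS fw])
  define Fw where "Fw = real_of_ereal (f w)"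
  have fwe: "f w = ereal Fw" unfolding Fw_def using fw pf by (cases "f w") (auto simp: proper_fun_def)
  define A0 where "A0 = Fu + u \<bullet> b + \<kappa> * negent u"
  define A1 where "A1 = Fw + w \<bullet> b + \<kappa> * negent w"
  have key: "A0 \<le> A1 + \<kappa> * W * ln s" if s: "0 < s" "s < 1" for s
  proof -
    define v where "v = (1 - s) *\<^sub>R u + s *\<^sub>R w"
    have vS: "v \<in> prob_simplex"
      unfolding v_def using s convexD[OF convex_prob_simplex uS wS, of "1 - s" s] by simp
    have fv: "f v \<le> ereal ((1 - s) * Fu + s * Fw)"
      unfolding v_def using s by (intro convex_funD[OF cf]) (auto simp: fu fwe)
    have "A0 \<le> ((1 - s) * Fu + s * Fw) + v \<bullet> b + \<kappa> * negent v"
      unfolding A0_def by (rule entropic_prox_le[OF prox fu vS fv])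
    also have "\<dots> \<le> ((1 - s) * Fu + s * Fw) + v \<bullet> b
        + \<kappa> * ((1 - s) * negent u + s * negent w + s * ln s * W)"
      using negent_convex_comb_le[OF uS wP s] \<kappa> unfolding v_def W_def by simp
    finally have "A0 \<le> (1 - s) * A0 + s * A1 + s * (\<kappa> * W * ln s)"
      unfolding A0_def A1_def v_def by (simp add: inner_add_left algebra_simps)
    then have "s * A0 \<le> s * (A1 + \<kappa> * W * ln s)" by (simp add: algebra_simps)
    then show ?thesis using s by simp
  qed
  define s where "s = exp (- (\<bar>A1 - A0\<bar> + 1) / (\<kappa> * W))"
  have "ln s < 0" and "\<kappa> * W * ln s = - (\<bar>A1 - A0\<bar> + 1)"
    using \<kappa> \<open>0 < W\<close> by (simp_all add: s_def divide_neg_pos)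
  then have "A0 \<le> A1 - (\<bar>A1 - A0\<bar> + 1)" using key[of s] by (simp add: s_def)
  then show False by linarith
qed

lemma entropic_prox_three_point:
  assumes cf: "convex_fun f" and \<kappa>: "0 < \<kappa>" and prox: "is_entropic_prox f b \<kappa> u"
    and uP: "u \<in> posorth" and fu: "f u = ereal Fu" and zS: "z \<in> prob_simplex" and fz: "f z = ereal Fz"
  shows "Fu + u \<bullet> b + \<kappa> * negent u + \<kappa> * bregman z u \<le> Fz + z \<bullet> b + \<kappa> * negent z"
proof -
  have uS: "u \<in> prob_simplex" using prox by (simp add: is_entropic_prox_def)
  define C where "C = (\<Sum>k\<in>UNIV. (z$k - u$k)^2 / u$k)"
  define D where "D = Fz - Fu + (z - u) \<bullet> b + \<kappa> * (negent_grad u \<bullet> (z - u))"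
  have "- D \<le> 0"
  proof (rule nonpos_if_le_small_multiples)
    fix s :: real assume s: "0 < s" "s \<le> 1"
    define v where "v = (1 - s) *\<^sub>R u + s *\<^sub>R z"
    have vS: "v \<in> prob_simplex"
      unfolding v_def using s convexD[OF convex_prob_simplex uS zS, of "1 - s" s] by simp
    have fv: "f v \<le> ereal ((1 - s) * Fu + s * Fz)"
      unfolding v_def using s by (intro convex_funD[OF cf]) (auto simp: fu fz)
    have vu: "v - u = s *\<^sub>R (z - u)" by (simp add: v_def algebra_simps)
    have "bregman v u \<le> (\<Sum>k\<in>UNIV. (v$k - u$k)^2 / u$k)"
      by (rule bregman_le_chi2[OF prob_simplex_nonneg[OF vS] uP])
    also have "\<dots> = s^2 * C"
    proof -
      have "v$k - u$k = s * (z$k - u$k)" for k using arg_cong[OF vu, of "\<lambda>x. x$k"] by simp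
      then show ?thesis unfolding C_def sum_distrib_left by (simp add: power_mult_distrib)
    qed
    finally have Bv: "bregman v u \<le> s^2 * C" .
    have "Fu + u \<bullet> b + \<kappa> * negent u \<le> ((1 - s) * Fu + s * Fz) + v \<bullet> b + \<kappa> * negent v"
      by (rule entropic_prox_le[OF prox fu vS fv])
    also have "negent v = negent u + s * (negent_grad u \<bullet> (z - u)) + bregman v u"
      by (simp add: bregman_def vu)
    finally have "0 \<le> s * D + \<kappa> * bregman v u"
      unfolding D_def v_def by (simp add: inner_add_left inner_diff_left algebra_simps)
    then have "0 \<le> s * D + \<kappa> * (s^2 * C)" using Bv \<kappa> by (smt (verit) mult_left_mono)
    then have "0 \<le> s * (D + s * (\<kappa> * C))" by (simp add: algebra_simps power2_eq_square)
    then show "- D \<le> s * (\<kappa> * C)" using s by (simp add: zero_le_mult_iff)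
  qed
  moreover have "Fz + z \<bullet> b + \<kappa> * negent z - (Fu + u \<bullet> b + \<kappa> * negent u + \<kappa> * bregman z u) = D"
    unfolding D_def bregman_def by (simp add: algebra_simps inner_diff_left)
  ultimately show ?thesis by simp
qed

lemma bregman_prox_objective_eq:
  "z \<bullet> a + \<rho> * bregman z y + \<delta> * bregman z x
   = z \<bullet> (a - \<rho> *\<^sub>R negent_grad y - \<delta> *\<^sub>R negent_grad x) + (\<rho> + \<delta>) * negent z
     + (\<rho> * (negent_grad y \<bullet> y - negent y) + \<delta> * (negent_grad x \<bullet> x - negent x))"
  unfolding bregman_eq_negent_minus_affine by (simp add: inner_diff_right inner_commute algebra_simps)

lemma is_entropic_prox_bregman_step:
  fixes f :: "real^'n \<Rightarrow> ereal"
  assumes "u \<in> prob_simplex"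
    and "\<forall>z\<in>prob_simplex. f u + ereal (u \<bullet> a + \<rho> * bregman u y + \<delta> * bregman u x)
                 \<le> f z + ereal (z \<bullet> a + \<rho> * bregman z y + \<delta> * bregman z x)"
  shows "is_entropic_prox f (a - \<rho> *\<^sub>R negent_grad y - \<delta> *\<^sub>R negent_grad x) (\<rho> + \<delta>) u"
  unfolding is_entropic_prox_def
proof (intro conjI ballI)
  fix z :: "real^'n" assume "z \<in> prob_simplex"
  with assms(2) have "f u + ereal (u \<bullet> a + \<rho> * bregman u y + \<delta> * bregman u x)
                 \<le> f z + ereal (z \<bullet> a + \<rho> * bregman z y + \<delta> * bregman z x)" by blast
  then show "f u + ereal (u \<bullet> (a - \<rho> *\<^sub>R negent_grad y - \<delta> *\<^sub>R negent_grad x) + (\<rho> + \<delta>) * negent u)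
      \<le> f z + ereal (z \<bullet> (a - \<rho> *\<^sub>R negent_grad y - \<delta> *\<^sub>R negent_grad x) + (\<rho> + \<delta>) * negent z)"
    unfolding bregman_prox_objective_eq by (cases "f u"; cases "f z") auto
qed (rule assms(1))

text \<open>The minimiser of a convex combination of Bregman divergences is the normalised
  geometric mean \<open>exp (\<Sum>j. p j \<nabla>\<phi> (x j))\<close>; it satisfies a Pythagorean identity.\<close>
lemma bregman_barycenter:
  fixes x :: "'m::finite \<Rightarrow> real^'n::finite" and p :: "'m \<Rightarrow> real"
  assumes p1: "(\<Sum>j\<in>UNIV. p j) = 1" and yS: "y \<in> prob_simplex"
    and min: "\<forall>z\<in>prob_simplex. (\<Sum>j\<in>UNIV. p j * bregman y (x j)) \<le> (\<Sum>j\<in>UNIV. p j * bregman z (x j))"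
  shows "y \<in> posorth"
    and "\<And>z. z \<in> prob_simplex \<Longrightarrow>
           (\<Sum>j\<in>UNIV. p j * bregman z (x j)) = bregman z y + (\<Sum>j\<in>UNIV. p j * bregman y (x j))"
proof -
  define q where "q = (\<Sum>j\<in>UNIV. p j *\<^sub>R negent_grad (x j))"
  define K where "K = (\<Sum>j\<in>UNIV. p j * (negent_grad (x j) \<bullet> x j - negent (x j)))"
  define Z where "Z = (\<Sum>k\<in>UNIV. exp (q$k))"
  have "0 < Z" unfolding Z_def by (intro sum_pos) auto
  define yh :: "real^'n" where "yh = (\<chi> k. exp (q$k) / Z)"
  have yhS: "yh \<in> prob_simplex"
    using \<open>0 < Z\<close> by (simp add: prob_simplex_def yh_def sum_divide_distrib[symmetric] Z_def)
  have yhP: "yh \<in> posorth" using \<open>0 < Z\<close> by (simp add: posorth_def yh_def)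
  define Obj where "Obj z = (\<Sum>j\<in>UNIV. p j * bregman z (x j))" for z
  have Obj: "Obj z = negent z - q \<bullet> z + K" for z
  proof -
    have "Obj z = (\<Sum>j\<in>UNIV. p j) * negent z - q \<bullet> z + K"
      unfolding Obj_def bregman_eq_negent_minus_affine q_def K_def
      by (simp add: algebra_simps sum.distrib sum_subtractf sum_distrib_left inner_sum_left)
    then show ?thesis using p1 by simp
  qed
  have pyth: "Obj z = Obj yh + bregman z yh" if zS: "z \<in> prob_simplex" for z
  proof -
    have "negent_grad yh = q + (1 - ln Z) *\<^sub>R (\<chi> k. 1)"
      using \<open>0 < Z\<close> by (simp add: negent_grad_def yh_def vec_eq_iff ln_div)
    moreover have "(\<chi> k. 1) \<bullet> (z - yh) = 0"
      using prob_simplex_sum[OF zS] prob_simplex_sum[OF yhS] by (simp add: inner_vec_def sum_subtractf)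
    ultimately have "bregman z yh = negent z - negent yh - q \<bullet> (z - yh)"
      by (simp add: bregman_def inner_add_left)
    then show ?thesis unfolding Obj by (simp add: inner_diff_right)
  qed
  have "Obj y \<le> Obj yh" using min yhS unfolding Obj_def by blast
  then have "bregman y yh \<le> 0" using pyth[OF yS] by simp
  moreover have "(norm (y - yh))^2 / 2 \<le> bregman y yh" by (rule bregman_ge_half_sqdist[OF yS yhS yhP])
  ultimately have "(norm (y - yh))^2 \<le> 0" by linarith
  then have "y = yh" by simp
  then show "y \<in> posorth" using yhP by simp
  show "Obj z = bregman z y + Obj y" if "z \<in> prob_simplex" for z
    using pyth[OF that] \<open>y = yh\<close> by simp
qed

section \<open>Mixing stacked vectors with a symmetric stochastic matrix\<close>

definition mix :: "real^'m^'m \<Rightarrow> 'a::real_vector^'m \<Rightarrow> 'a^'m" where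
  "mix P X = (\<chi> i. \<Sum>j\<in>UNIV. P$i$j *\<^sub>R X$j)"

lemma mix_component [simp]: "mix P X $ i = (\<Sum>j\<in>UNIV. P$i$j *\<^sub>R X$j)"
  by (simp add: mix_def)

lemma linear_mix: "linear (mix P)"
  by (rule linearI) (simp_all add: vec_eq_iff scaleR_add_right sum.distrib scaleR_sum_right mult.commute)

lemma mix_real: "mix P v = P *v v"
  by (simp add: vec_eq_iff matrix_vector_mult_def)

lemma mix_const:
  assumes "stochastic_mat P"
  shows "mix P (\<chi> i. c) = (\<chi> i. c)"
  using assms by (simp add: vec_eq_iff stochastic_mat_def flip: scaleR_sum_left)

lemma stochastic_column_sum:
  assumes "symmetric_mat P" "stochastic_mat P"
  shows "(\<Sum>i\<in>UNIV. P$i$j) = 1"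
proof -
  have "(\<Sum>i\<in>UNIV. P$i$j) = (\<Sum>i\<in>UNIV. P$j$i)" using assms(1) by (simp add: symmetric_mat_def)
  then show ?thesis using assms(2) by (simp add: stochastic_mat_def)
qed

lemma power2_norm_vec: "(norm (X::'a::real_inner^'m))^2 = (\<Sum>i\<in>UNIV. (norm (X$i))^2)"
  unfolding power2_norm_eq_inner by (simp add: inner_vec_def)

lemma inner_mix_commute:
  assumes "symmetric_mat P"
  shows "mix P X \<bullet> Y = X \<bullet> mix P (Y::'a::real_inner^'m)"
proof -
  have "mix P X \<bullet> Y = (\<Sum>i\<in>UNIV. \<Sum>j\<in>UNIV. P$i$j * (X$j \<bullet> Y$i))"
    by (simp add: inner_vec_def inner_sum_left)
  also have "\<dots> = (\<Sum>j\<in>UNIV. \<Sum>i\<in>UNIV. P$j$i * (X$j \<bullet> Y$i))"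
    using assms unfolding symmetric_mat_def by (subst sum.swap) simp
  also have "\<dots> = X \<bullet> mix P Y"
    by (simp add: inner_vec_def inner_sum_right inner_commute)
  finally show ?thesis .
qed

lemma sum_mix:
  assumes "symmetric_mat P" "stochastic_mat P"
  shows "(\<Sum>i\<in>UNIV. mix P X $ i) = (\<Sum>i\<in>UNIV. X $ i)"
proof -
  have "(\<Sum>i\<in>UNIV. mix P X $ i) = (\<Sum>j\<in>UNIV. \<Sum>i\<in>UNIV. P$i$j *\<^sub>R X$j)"
    unfolding mix_component by (rule sum.swap)
  also have "\<dots> = (\<Sum>j\<in>UNIV. (\<Sum>i\<in>UNIV. P$i$j) *\<^sub>R X$j)" by (simp add: scaleR_sum_left)
  finally show ?thesis using stochastic_column_sum[OF assms] by simp
qed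

lemma power2_norm_convex_comb_le:
  fixes v :: "'i \<Rightarrow> 'a::real_inner"
  assumes "finite A" "sum p A = 1" "\<And>j. j \<in> A \<Longrightarrow> 0 \<le> p j"
  shows "(norm (\<Sum>j\<in>A. p j *\<^sub>R v j))^2 \<le> (\<Sum>j\<in>A. p j * (norm (v j))^2)"
proof -
  define V where "V = (\<Sum>j\<in>A. p j *\<^sub>R v j)"
  have "0 \<le> (\<Sum>j\<in>A. p j * (norm (v j - V))^2)"
    using assms by (intro sum_nonneg mult_nonneg_nonneg) auto
  also have "\<dots> = (\<Sum>j\<in>A. p j * (norm (v j))^2) - 2 * ((\<Sum>j\<in>A. p j *\<^sub>R v j) \<bullet> V)
      + (\<Sum>j\<in>A. p j) * (V \<bullet> V)"
    by (simp add: power2_norm_eq_inner inner_diff_left inner_diff_right algebra_simps sum.distrib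
        sum_subtractf sum_distrib_left sum_distrib_right inner_sum_left inner_sum_right inner_commute)
  finally show ?thesis using assms(2) by (simp add: V_def power2_norm_eq_inner)
qed

lemma norm_mix_le:
  assumes "symmetric_mat P" "stochastic_mat P"
  shows "norm (mix P X) \<le> norm (X::'a::real_inner^'m)"
proof -
  have "(norm (mix P X))^2 \<le> (\<Sum>i\<in>UNIV. \<Sum>j\<in>UNIV. P$i$j * (norm (X$j))^2)"
    unfolding power2_norm_vec mix_component using assms(2)
    by (intro sum_mono power2_norm_convex_comb_le) (auto simp: stochastic_mat_def)
  also have "\<dots> = (\<Sum>j\<in>UNIV. \<Sum>i\<in>UNIV. P$i$j * (norm (X$j))^2)" by (rule sum.swap)
  also have "\<dots> = (\<Sum>j\<in>UNIV. (\<Sum>i\<in>UNIV. P$i$j) * (norm (X$j))^2)" by (simp add: sum_distrib_right)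
  also have "\<dots> = (norm X)^2" using stochastic_column_sum[OF assms] by (simp add: power2_norm_vec)
  finally show ?thesis by (simp add: power2_le_iff_abs_le)
qed

lemma inner_mix_le:
  assumes "symmetric_mat P" "stochastic_mat P"
  shows "X \<bullet> mix P X \<le> X \<bullet> (X::'a::real_inner^'m)"
proof -
  have "X \<bullet> mix P X \<le> norm X * norm (mix P X)" by (rule norm_cauchy_schwarz)
  also have "\<dots> \<le> norm X * norm X" by (intro mult_left_mono norm_mix_le[OF assms]) simp
  finally show ?thesis by (simp add: norm_eq_sqrt_inner)
qed

lemma inner_mix_nonneg:
  assumes "psd_mat P"
  shows "0 \<le> X \<bullet> mix P (X::(real^'n)^'m)"
proof -
  have "X \<bullet> mix P X = (\<Sum>i\<in>UNIV. \<Sum>k\<in>UNIV. X$i$k * (\<Sum>j\<in>UNIV. P$i$j * X$j$k))"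
    by (simp add: inner_vec_def inner_sum_right sum_distrib_left)
  also have "\<dots> = (\<Sum>k\<in>UNIV. \<Sum>i\<in>UNIV. X$i$k * (\<Sum>j\<in>UNIV. P$i$j * X$j$k))" by (rule sum.swap)
  also have "\<dots> = (\<Sum>k\<in>UNIV. (\<chi> i. X$i$k) \<bullet> (P *v (\<chi> i. X$i$k)))"
    by (simp add: inner_vec_def matrix_vector_mult_def)
  also have "\<dots> \<ge> 0" using assms unfolding psd_mat_def by (intro sum_nonneg) auto
  finally show ?thesis .
qed

lemma power2_norm_laplacian_le:
  assumes "symmetric_mat P" "stochastic_mat P"
  shows "(norm (X - mix P X))^2 \<le> 2 * (X \<bullet> (X - mix P (X::'a::real_inner^'m)))"
proof -
  have "(norm (X - mix P X))^2 = X \<bullet> X - 2 * (X \<bullet> mix P X) + (norm (mix P X))^2"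
    by (simp add: power2_norm_eq_inner inner_diff_left inner_diff_right inner_commute)
  moreover have "(norm (mix P X))^2 \<le> X \<bullet> X"
    using norm_mix_le[OF assms, of X] by (simp add: power2_norm_eq_inner[symmetric] power_mono)
  ultimately show ?thesis by (simp add: inner_diff_right)
qed

lemma inner_laplacian_le_cross_dist:
  fixes X Y :: "(real^'n)^'m"
  assumes sym: "symmetric_mat P" and st: "stochastic_mat P" and psd: "psd_mat P"
  shows "X \<bullet> (X - mix P X) \<le> (\<Sum>i\<in>UNIV. \<Sum>j\<in>UNIV. P$i$j * (norm (X$i - Y$j))^2)"
    (is "_ \<le> ?R")
proof -
  have rs: "\<And>i. (\<Sum>j\<in>UNIV. P$i$j) = 1" using st by (simp add: stochastic_mat_def)
  have "?R = (\<Sum>i\<in>UNIV. \<Sum>j\<in>UNIV. P$i$j * (X$i \<bullet> X$i) - 2 * (P$i$j * (X$i \<bullet> Y$j)) + P$i$j * (Y$j \<bullet> Y$j))"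
    by (simp add: power2_norm_eq_inner inner_diff_left inner_diff_right inner_commute algebra_simps)
  also have "\<dots> = (\<Sum>i\<in>UNIV. (\<Sum>j\<in>UNIV. P$i$j) * (X$i \<bullet> X$i))
      - 2 * (\<Sum>i\<in>UNIV. X$i \<bullet> (\<Sum>j\<in>UNIV. P$i$j *\<^sub>R Y$j))
      + (\<Sum>j\<in>UNIV. \<Sum>i\<in>UNIV. P$i$j * (Y$j \<bullet> Y$j))"
    by (simp add: sum.distrib sum_subtractf sum_distrib_left sum_distrib_right inner_sum_right
        sum.swap[of "\<lambda>i j. P$i$j * (Y$j \<bullet> Y$j)"])
  also have "\<dots> = X \<bullet> X - 2 * (X \<bullet> mix P Y) + Y \<bullet> Y"
    using rs stochastic_column_sum[OF sym st]
    by (simp add: inner_vec_def[of X] inner_vec_def[of Y Y] sum_distrib_right[symmetric])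
  finally have R: "?R = X \<bullet> X - 2 * (X \<bullet> mix P Y) + Y \<bullet> Y" .
  have "0 \<le> (X - Y) \<bullet> mix P (X - Y)" by (rule inner_mix_nonneg[OF psd])
  also have "\<dots> = X \<bullet> mix P X - 2 * (X \<bullet> mix P Y) + Y \<bullet> mix P Y"
    using inner_mix_commute[OF sym, of Y X]
    by (simp add: linear_diff[OF linear_mix] inner_diff_left inner_diff_right inner_commute)
  finally show ?thesis using inner_mix_le[OF sym st, of Y] unfolding R by (simp add: inner_diff_right)
qed

lemma power2_norm_laplacian_simplex_le:
  fixes X :: "(real^'n)^'m"
  assumes st: "stochastic_mat P" and XS: "\<And>i. X$i \<in> prob_simplex"
  shows "(norm (X - mix P X))^2 \<le> 2 * real CARD('m)"
proof -
  have rs: "(\<Sum>j\<in>UNIV. P$i$j) = 1" "\<And>j. 0 \<le> P$i$j" for i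
    using st by (auto simp: stochastic_mat_def)
  have each: "(norm ((X - mix P X)$i))^2 \<le> 2" for i
  proof -
    have "X$i - mix P X $ i = (\<Sum>j\<in>UNIV. P$i$j *\<^sub>R (X$i - X$j))"
      using rs(1)[of i] by (simp add: scaleR_diff_right sum_subtractf flip: scaleR_sum_left)
    then have "(norm (X$i - mix P X $ i))^2 \<le> (\<Sum>j\<in>UNIV. P$i$j * (norm (X$i - X$j))^2)"
      using rs by (simp add: power2_norm_convex_comb_le)
    also have "\<dots> \<le> (\<Sum>j\<in>UNIV. P$i$j * 2)"
      using rs(2) power2_norm_diff_prob_simplex_le_2[OF XS XS] by (intro sum_mono mult_left_mono) auto
    finally show ?thesis using rs(1)[of i] by (simp add: sum_distrib_right[symmetric])
  qed
  have "(\<Sum>i\<in>UNIV. (norm ((X - mix P X)$i))^2) \<le> (\<Sum>i\<in>(UNIV::'m set). 2)"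
    by (rule sum_mono) (rule each)
  then show ?thesis by (subst power2_norm_vec) simp
qed

section \<open>Spectral gap of an irreducible symmetric stochastic matrix\<close>

lemma sum_eq_inner_ones: "(\<Sum>i\<in>UNIV. v$i) = (\<chi> i. 1) \<bullet> (v::real^'m)"
  by (simp add: inner_vec_def)

lemma stochastic_irreducible_fixpoint_const:
  fixes P :: "real^'m::finite^'m"
  assumes st: "stochastic_mat P" and irr: "irreducible_mat P" and fx: "P *v v = v"
  shows "v$i = v$j"
proof -
  define M where "M = Max (range (($) v))"
  have vle: "v$k \<le> M" for k unfolding M_def by simp
  obtain i0 where i0: "v$i0 = M" unfolding M_def
    by (metis (mono_tags, lifting) Max_in UNIV_not_empty empty_is_image finite imageE finite_imageI)
  have step: "v$b = M" if "v$a = M" "P$a$b > 0" for a b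
  proof (rule ccontr)
    assume "v$b \<noteq> M"
    then have "0 < P$a$b * (M - v$b)" using vle[of b] that(2) by simp
    moreover have "(\<Sum>j\<in>UNIV. P$a$j * (M - v$j)) = (\<Sum>j\<in>UNIV. P$a$j) * M - (P *v v)$a"
      by (simp add: right_diff_distrib sum_subtractf sum_distrib_right matrix_vector_mult_def)
    then have "(\<Sum>j\<in>UNIV. P$a$j * (M - v$j)) = 0" using fx that(1) st by (simp add: stochastic_mat_def)
    moreover have "\<forall>j\<in>UNIV. 0 \<le> P$a$j * (M - v$j)" using st vle by (auto simp: stochastic_mat_def)
    ultimately show False by (subst (asm) sum_nonneg_eq_0_iff) auto
  qed
  have all: "v$k = M" for k
  proof -
    have "(i0, k) \<in> {(a, b). P$a$b > 0}\<^sup>+" using irr by (simp add: irreducible_mat_def)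
    then show ?thesis by (induction rule: trancl_induct) (use i0 step in auto)
  qed
  show ?thesis using all[of i] all[of j] by simp
qed

lemma stochastic_irreducible_fixpoint_eq_0:
  fixes P :: "real^'m::finite^'m"
  assumes "stochastic_mat P" "irreducible_mat P" "P *v v = v" "(\<Sum>i\<in>UNIV. v$i) = 0"
  shows "v = 0"
proof -
  obtain i0 :: 'm where True by simp
  have "(\<Sum>i\<in>UNIV. v$i) = (\<Sum>i\<in>(UNIV::'m set). v$i0)"
    using stochastic_irreducible_fixpoint_const[OF assms(1-3)] by (intro sum.cong) auto
  then have "v$i0 = 0" using assms(4) by simp
  then show ?thesis
    using stochastic_irreducible_fixpoint_const[OF assms(1-3)] by (metis vec_eq_iff zero_index)
qed

lemma linear_coeff_eq_0_if_quadratic_nonpos: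
  fixes b c :: real
  assumes "\<And>t. 2 * t * b + t^2 * c \<le> 0"
  shows "b = 0"
proof -
  define K where "K = \<bar>c\<bar> + 1"
  have "0 < K" by (simp add: K_def)
  have "(2 * (b / K) * b + (b / K)^2 * c) * K^2 \<le> 0"
    using assms[of "b / K"] by (simp add: mult_nonpos_nonneg)
  also have "(2 * (b / K) * b + (b / K)^2 * c) * K^2 = b^2 * (2 * K + c)"
    using \<open>0 < K\<close> by (simp add: field_simps power2_eq_square)
  finally have "b^2 * (2 * K + c) \<le> 0" .
  moreover have "0 < 2 * K + c" by (simp add: K_def)
  ultimately have "b^2 \<le> 0" by (simp add: mult_le_0_iff)
  then show ?thesis by simp
qed

text \<open>A maximiser of the Rayleigh quotient on the invariant hyperplane \<open>1\<^sup>\<bottom>\<close> is an eigenvector: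
  perturbing it along the residual \<open>d = P v\<^sub>0 - \<mu> v\<^sub>0\<close> would otherwise increase the quotient.\<close>
lemma rayleigh_maximizer_eigenvector:
  fixes P :: "real^'m::finite^'m"
  assumes sym: "symmetric_mat P" and st: "stochastic_mat P"
    and v0: "(\<Sum>i\<in>UNIV. v0$i) = 0"
    and max: "\<And>v. (\<Sum>i\<in>UNIV. v$i) = 0 \<Longrightarrow> v \<bullet> (P *v v) \<le> \<mu> * (v \<bullet> v)"
    and eq: "v0 \<bullet> (P *v v0) = \<mu> * (v0 \<bullet> v0)"
  shows "P *v v0 = \<mu> *\<^sub>R v0"
proof -
  define d where "d = P *v v0 - \<mu> *\<^sub>R v0"
  have Psym: "u \<bullet> (P *v w) = w \<bullet> (P *v u)" for u w
    using inner_mix_commute[OF sym, of w u] by (simp add: mix_real inner_commute)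
  have "(\<Sum>i\<in>UNIV. d$i) = 0"
    using sum_mix[OF sym st, of v0] v0 by (simp add: d_def mix_real sum_subtractf sum_distrib_left[symmetric])
  then have sum_t: "(\<Sum>i\<in>UNIV. (v0 + t *\<^sub>R d)$i) = 0" for t
    using v0 by (simp add: sum.distrib sum_distrib_left[symmetric])
  have "2 * t * (d \<bullet> d) + t^2 * (d \<bullet> (P *v d) - \<mu> * (d \<bullet> d)) \<le> 0" for t
  proof -
    define A B C where "A = d \<bullet> (P *v v0)" and "B = d \<bullet> (P *v d)" and "C = d \<bullet> v0"
    have "(v0 + t *\<^sub>R d) \<bullet> (P *v (v0 + t *\<^sub>R d)) = v0 \<bullet> (P *v v0) + 2 * t * A + t^2 * B"
      using Psym[of v0 d] by (simp add: A_def B_def matrix_vector_right_distrib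
          matrix_vector_mult_scaleR inner_add_left inner_add_right power2_eq_square algebra_simps)
    moreover have "(v0 + t *\<^sub>R d) \<bullet> (v0 + t *\<^sub>R d) = v0 \<bullet> v0 + 2 * t * C + t^2 * (d \<bullet> d)"
      by (simp add: C_def inner_add_left inner_add_right inner_commute power2_eq_square algebra_simps)
    ultimately have le: "2 * t * A + t^2 * B \<le> \<mu> * (2 * t * C + t^2 * (d \<bullet> d))"
      using max[OF sum_t[of t]] eq by (simp add: algebra_simps)
    have "d \<bullet> d = d \<bullet> (P *v v0 - \<mu> *\<^sub>R v0)" by (metis d_def)
    then have dd: "d \<bullet> d = A - \<mu> * C" by (simp add: A_def C_def inner_diff_right)
    show ?thesis using le unfolding B_def[symmetric] dd by (simp add: algebra_simps)
  qed
  then have "d \<bullet> d = 0" by (rule linear_coeff_eq_0_if_quadratic_nonpos)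
  then show ?thesis by (simp add: d_def)
qed

lemma spectral_gap_rayleigh:
  fixes P :: "real^'m::finite^'m"
  assumes sym: "symmetric_mat P" and st: "stochastic_mat P" and irr: "irreducible_mat P"
    and m2: "CARD('m) \<ge> 2"
  obtains \<mu> v0 where "v0 \<noteq> 0" "P *v v0 = \<mu> *\<^sub>R v0" "\<mu> < 1"
     "\<And>v. (\<Sum>i\<in>UNIV. v$i) = 0 \<Longrightarrow> v \<bullet> (P *v v) \<le> \<mu> * (v \<bullet> v)"
proof -
  define U where "U = {v::real^'m. (\<chi> i. 1) \<bullet> v = 0} \<inter> sphere 0 1"
  have "compact U" unfolding U_def
    by (intro closed_Int_compact closed_hyperplane compact_sphere)
  obtain a b :: 'm where "a \<noteq> b" using m2 card_le_Suc0_iff_eq[of "UNIV::'m set"] by auto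
  define w :: "real^'m" where "w = axis a 1 - axis b 1"
  have "(\<chi> i. 1) \<bullet> w = 0" by (simp add: w_def inner_diff_right inner_vec_def axis_def sum_subtractf)
  moreover have "w \<noteq> 0" using \<open>a \<noteq> b\<close> by (simp add: w_def vec_eq_iff axis_def) metis
  ultimately have "(1 / norm w) *\<^sub>R w \<in> U" by (simp add: U_def)
  then have "U \<noteq> {}" by auto
  have "continuous_on U (\<lambda>v. v \<bullet> (P *v v))"
    by (intro continuous_intros matrix_vector_mult_linear_continuous_on)
  then obtain v0 where v0U: "v0 \<in> U" and vmax: "\<And>v. v \<in> U \<Longrightarrow> v \<bullet> (P *v v) \<le> v0 \<bullet> (P *v v0)"
    using continuous_attains_sup[OF \<open>compact U\<close> \<open>U \<noteq> {}\<close>] by blast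
  define \<mu> where "\<mu> = v0 \<bullet> (P *v v0)"
  have v0S: "(\<Sum>i\<in>UNIV. v0$i) = 0" and v0n: "v0 \<bullet> v0 = 1"
    using v0U by (auto simp: U_def sum_eq_inner_ones dot_square_norm)
  have gen: "v \<bullet> (P *v v) \<le> \<mu> * (v \<bullet> v)" if "(\<Sum>i\<in>UNIV. v$i) = 0" for v
  proof (cases "v = 0")
    case False
    then have "(1 / norm v) *\<^sub>R v \<in> U" using that by (simp add: U_def sum_eq_inner_ones)
    from vmax[OF this] have "(v \<bullet> (P *v v)) / (norm v)^2 \<le> \<mu>"
      by (simp add: \<mu>_def matrix_vector_mult_scaleR power2_eq_square)
    then show ?thesis using False by (simp add: dot_square_norm divide_le_eq mult.commute)
  qed simp
  have "v0 \<bullet> (P *v v0) = \<mu> * (v0 \<bullet> v0)" by (simp add: \<mu>_def v0n)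
  with gen have eig: "P *v v0 = \<mu> *\<^sub>R v0" by (rule rayleigh_maximizer_eigenvector[OF sym st v0S])
  have "\<mu> \<le> 1" using inner_mix_le[OF sym st, of v0] v0n by (simp add: \<mu>_def mix_real)
  moreover have "\<mu> \<noteq> 1"
  proof
    assume "\<mu> = 1"
    with eig have "v0 = 0" using stochastic_irreducible_fixpoint_eq_0[OF st irr _ v0S] by simp
    then show False using v0n by simp
  qed
  moreover have "v0 \<noteq> 0" using v0n by auto
  ultimately show ?thesis using that eig gen by simp
qed

lemma poly_charpoly:
  "poly (charpoly P) x = det (\<chi> i j. (if i = j then x else 0) - (P :: real^'m::finite^'m)$i$j)"
proof -
  have pd: "poly (det M) x = det (\<chi> i j. poly (M$i$j) x)" for M :: "real poly^'m^'m"
    by (simp add: det_def poly_sum poly_prod poly_of_int)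
  show ?thesis unfolding charpoly_def pd by (rule arg_cong[where f=det]) (simp add: vec_eq_iff)
qed

lemma charmatrix_eq: "(\<chi> i j. (if i = j then x else 0) - P$i$j) = x *\<^sub>R mat 1 - (P::real^'m^'m)"
  by (simp add: vec_eq_iff mat_def)

lemma det_eq_0_iff_kernel:
  fixes A :: "real^'m::finite^'m"
  shows "det A = 0 \<longleftrightarrow> (\<exists>v. v \<noteq> 0 \<and> A *v v = 0)"
proof -
  have "det A \<noteq> 0 \<longleftrightarrow> inj ((*v) A)"
    using det_nz_iff_inj[OF matrix_vector_mul_linear[of A]] by simp
  also have "\<dots> \<longleftrightarrow> (\<forall>v. A *v v = 0 \<longrightarrow> v = 0)"
    by (rule linear_injective_0[OF matrix_vector_mul_linear])
  finally show ?thesis by blast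
qed

lemma charpoly_root_iff_eigenvalue:
  "poly (charpoly (P :: real^'m::finite^'m)) r = 0 \<longleftrightarrow> (\<exists>v. v \<noteq> 0 \<and> P *v v = r *\<^sub>R v)"
  unfolding poly_charpoly charmatrix_eq det_eq_0_iff_kernel
  by (simp add: matrix_vector_mult_diff_rdistrib flip: scaleR_matrix_vector_assoc)
    (metis eq_commute)

lemma eigenvalue_range:
  assumes sym: "symmetric_mat P" and st: "stochastic_mat P" and psd: "psd_mat P"
    and v: "v \<noteq> 0" "(P::real^'m::finite^'m) *v v = r *\<^sub>R v"
  shows "0 \<le> r" "r \<le> 1"
proof -
  have vv: "0 < v \<bullet> v" using v by simp
  have "0 \<le> r * (v \<bullet> v)" using psd v unfolding psd_mat_def by (metis inner_scaleR_right)
  then show "0 \<le> r" using vv by (metis not_le zero_le_mult_iff)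
  have "r * (v \<bullet> v) \<le> 1 * (v \<bullet> v)"
    using inner_mix_le[OF sym st, of v] v by (simp add: mix_real)
  then show "r \<le> 1" using vv by (simp only: mult_le_cancel_right_pos)
qed

lemma det_row_add_sum:
  fixes B :: "real^'m::finite^'m"
  shows "det (\<chi> k. if k = a then (\<Sum>l\<in>UNIV. B$l) else B$k) = det B"
proof -
  have row_eq: "row k B = B$k" for k by (simp add: row_def vec_eq_iff)
  define x where "x = (\<Sum>l\<in>UNIV-{a}. B$l)"
  have "x \<in> vec.span {row j B |j. j \<noteq> a}"
    unfolding x_def by (intro vec.span_sum vec.span_base) (auto simp: row_eq)
  then have "det (\<chi> k. if k = a then row a B + x else row k B) = det B" by (rule det_row_span)
  moreover have "(\<Sum>l\<in>UNIV. B$l) = row a B + x"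
    unfolding x_def row_eq by (simp add: sum.remove[of UNIV a])
  then have "(\<chi> k. if k = a then row a B + x else row k B) = (\<chi> k. if k = a then (\<Sum>l\<in>UNIV. B$l) else B$k)"
    by (simp add: row_eq vec_eq_iff)
  ultimately show ?thesis by simp
qed

lemma det_rows_add_multiple:
  fixes u :: "real^'m::finite" and r :: "'m \<Rightarrow> real^'m"
  assumes "finite K" "a \<notin> K"
  shows "det (\<chi> k. if k = a then u else if k \<in> K then r k + c *s u else r k)
       = det (\<chi> k. if k = a then u else r k)"
  using assms
proof (induction K rule: finite_induct)
  case (insert j K)
  define B where "B = (\<chi> k. if k = a then u else if k \<in> K then r k + c *s u else r k)"
  have "j \<noteq> a" using insert by auto
  have rowB: "row k B = (if k = a then u else if k \<in> K then r k + c *s u else r k)" for k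
    by (simp add: B_def row_def vec_eq_iff)
  have "c *s u \<in> vec.span {row l B |l. l \<noteq> j}"
    using \<open>j \<noteq> a\<close> rowB[of a] by (intro vec.span_scale vec.span_base) auto
  then have "det (\<chi> k. if k = j then row j B + c *s u else row k B) = det B"
    by (rule det_row_span)
  moreover have "(\<chi> k. if k = a then u else if k \<in> insert j K then r k + c *s u else r k)
      = (\<chi> k. if k = j then row j B + c *s u else row k B)"
    using \<open>j \<noteq> a\<close> insert(2) by (auto simp: vec_eq_iff rowB)
  ultimately show ?case using insert by (simp add: B_def)
qed (simp only: empty_iff if_False)

text \<open>Deflation: subtracting \<open>J/m\<close> (\<open>J\<close> the all-ones matrix) from \<open>P\<close> moves the eigenvalue 1
  (eigenvector \<open>1\<close>) to 0 and keeps the rest of the spectrum.\<close>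
lemma det_charmatrix_deflated:
  fixes P :: "real^'m::finite^'m" and x :: real
  assumes sym: "symmetric_mat P" and st: "stochastic_mat P"
  shows "(x - 1) * det (\<chi> i j. (if i = j then x else 0) - (P$i$j - 1 / real CARD('m)))
       = x * det (\<chi> i j. (if i = j then x else 0) - P$i$j)"
proof -
  define m where "m = real CARD('m)"
  have "0 < m" by (simp add: m_def)
  define A where "A = (\<chi> i j. (if i = j then x else 0) - P$i$j)"
  define M where "M = (\<chi> i j. (if i = j then x else 0) - (P$i$j - 1 / m))"
  define ones :: "real^'m" where "ones = (\<chi> i. 1)"
  have cs: "(\<Sum>k\<in>UNIV. P$k$j) = 1" for j using stochastic_column_sum[OF sym st] .
  have dl: "(\<Sum>k\<in>UNIV. (if k = j then x else 0)) = x" for j :: 'm by (simp add: sum.delta)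
  have sumA: "(\<Sum>k\<in>UNIV. A$k) = (x - 1) *s ones"
    using dl cs by (simp add: A_def ones_def vec_eq_iff sum_component sum_subtractf)
  have sumM: "(\<Sum>k\<in>UNIV. M$k) = x *s ones"
    using dl cs \<open>0 < m\<close> by (simp add: M_def ones_def vec_eq_iff sum_component sum_subtractf
        sum.distrib m_def)
  obtain a :: 'm where True by simp
  define At where "At = (\<chi> k. if k = a then ones else A$k)"
  have "det A = det (\<chi> k. if k = a then (x - 1) *s ones else A$k)"
    using det_row_add_sum[of a A] unfolding sumA by simp
  also have "\<dots> = (x - 1) * det At" unfolding At_def by (rule det_row_mul)
  finally have dA: "det A = (x - 1) * det At" .
  have "det M = det (\<chi> k. if k = a then x *s ones else M$k)"
    using det_row_add_sum[of a M] unfolding sumM by simp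
  also have "\<dots> = x * det (\<chi> k. if k = a then ones else M$k)" by (rule det_row_mul)
  also have "(\<chi> k. if k = a then ones else M$k)
      = (\<chi> k. if k = a then ones else if k \<in> UNIV - {a} then A$k + (1/m) *s ones else A$k)"
    by (simp add: vec_eq_iff M_def A_def ones_def algebra_simps)
  also have "det \<dots> = det At" unfolding At_def by (rule det_rows_add_multiple) auto
  finally have dM: "det M = x * det At" .
  show ?thesis using dA dM unfolding A_def M_def m_def by simp
qed

definition shifted_laplacian :: "real^'m::finite^'m \<Rightarrow> real^'m^'m" where
  "shifted_laplacian P = (\<chi> i j. (if i = j then 1 else 0) - (P$i$j - 1 / real CARD('m)))"

lemma shifted_laplacian_mult:
  fixes P :: "real^'m::finite^'m"
  shows "shifted_laplacian P *v v = v - P *v v + ((\<Sum>i\<in>UNIV. v$i) / real CARD('m)) *\<^sub>R (\<chi> i. 1)"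
proof -
  have "(\<Sum>j\<in>UNIV. ((if i = j then 1 else 0) - (P$i$j - 1 / real CARD('m))) * v$j)
      = v$i - (\<Sum>j\<in>UNIV. P$i$j * v$j) + (\<Sum>j\<in>UNIV. v$j) / real CARD('m)" for i
  proof -
    have "((if i = j then 1 else 0) - (P$i$j - 1 / real CARD('m))) * v$j
        = (if i = j then v$i else 0) - P$i$j * v$j + v$j / real CARD('m)" for j
      by (auto simp: algebra_simps)
    then show ?thesis by (simp add: sum.distrib sum_subtractf sum_divide_distrib)
  qed
  then show ?thesis unfolding vec_eq_iff shifted_laplacian_def matrix_vector_mult_def by simp
qed

lemma sum_shifted_laplacian_mult:
  fixes P :: "real^'m::finite^'m"
  assumes "symmetric_mat P" "stochastic_mat P"
  shows "(\<Sum>i\<in>UNIV. (shifted_laplacian P *v v)$i) = (\<Sum>i\<in>UNIV. v$i)"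
  using sum_mix[OF assms, of v]
  by (simp add: shifted_laplacian_mult mix_real sum.distrib sum_subtractf)

lemma shifted_laplacian_inj:
  fixes P :: "real^'m::finite^'m"
  assumes sym: "symmetric_mat P" and st: "stochastic_mat P" and irr: "irreducible_mat P"
    and z: "shifted_laplacian P *v v = 0"
  shows "v = 0"
proof -
  have S: "(\<Sum>i\<in>UNIV. v$i) = 0" using sum_shifted_laplacian_mult[OF sym st, of v] z by simp
  then have "v - P *v v = 0" using z unfolding shifted_laplacian_mult by simp
  then have "P *v v = v" by (metis eq_iff_diff_eq_0)
  from stochastic_irreducible_fixpoint_eq_0[OF st irr this S] show ?thesis .
qed

lemma charpoly_simple_root_1:
  fixes P :: "real^'m::finite^'m"
  assumes sym: "symmetric_mat P" and st: "stochastic_mat P" and irr: "irreducible_mat P"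
  shows "charpoly P \<noteq> 0" "count (proots (charpoly P)) 1 = 1"
proof -
  define q where "q = det (\<chi> i j. (if i = j then [:0, 1:] else 0) - [:P$i$j - 1 / real CARD('m):])"
  have q: "poly q x = det (\<chi> i j. (if i = j then x else 0) - (P$i$j - 1 / real CARD('m)))" for x
    using poly_charpoly[of "\<chi> i j. P$i$j - 1 / real CARD('m)"] by (simp add: q_def charpoly_def)
  have "poly q 1 \<noteq> 0"
    using shifted_laplacian_inj[OF sym st irr] det_eq_0_iff_kernel
    unfolding q shifted_laplacian_def by blast
  then have "q \<noteq> 0" by auto
  have id: "[:-1, 1:] * q = [:0, 1:] * charpoly P"
    using det_charmatrix_deflated[OF sym st]
    by (intro poly_eq_poly_eq_iff[THEN iffD1] ext) (simp add: q poly_charpoly left_diff_distrib)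
  have "[:-1, 1:] * q \<noteq> 0" using \<open>q \<noteq> 0\<close> mult_eq_0_iff[of "[:-1, 1::real:]" q] by simp
  then show cp: "charpoly P \<noteq> 0" using id by auto
  have "order 1 ([:-1, 1:] * q) = order 1 [:-1, 1::real:] + order 1 q"
    by (rule order_mult[OF \<open>[:-1, 1:] * q \<noteq> 0\<close>])
  also have "\<dots> = 1" using order_power_n_n[of "1::real" 1] order_0I[OF \<open>poly q 1 \<noteq> 0\<close>] by simp
  finally have "order 1 ([:-1, 1:] * q) = 1" .
  moreover have "order 1 ([:0, 1:] * charpoly P) = order 1 [:0, 1::real:] + order 1 (charpoly P)"
    using \<open>[:-1, 1:] * q \<noteq> 0\<close> unfolding id by (rule order_mult)
  moreover have "order 1 [:0, 1::real:] = 0" by (rule order_0I) simp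
  ultimately show "count (proots (charpoly P)) 1 = 1" using id cp by (simp add: count_proots)
qed

lemma eigenvalues_by_magnitude_mem:
  assumes "charpoly P \<noteq> 0"
  shows "r \<in> set (eigenvalues_by_magnitude P) \<longleftrightarrow> (\<exists>v. v \<noteq> 0 \<and> (P::real^'m::finite^'m) *v v = r *\<^sub>R v)"
  using assms by (simp add: eigenvalues_by_magnitude_def charpoly_root_iff_eigenvalue)

lemma eigenvalues_by_magnitude_antimono:
  assumes sym: "symmetric_mat P" and st: "stochastic_mat P" and psd: "psd_mat P"
    and cp: "charpoly P \<noteq> 0" and ij: "i \<le> j" "j < length (eigenvalues_by_magnitude P)"
  shows "eigenvalues_by_magnitude P ! j \<le> eigenvalues_by_magnitude (P::real^'m::finite^'m) ! i"
proof -
  let ?l = "eigenvalues_by_magnitude P"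
  have nonneg: "0 \<le> ?l ! k" if "k < length ?l" for k
    using nth_mem[OF that] eigenvalue_range(1)[OF sym st psd] eigenvalues_by_magnitude_mem[OF cp]
    by blast
  have "sorted (map (\<lambda>x. - \<bar>x\<bar>) ?l)"
    unfolding eigenvalues_by_magnitude_def by (rule sorted_sort_key)
  then have "- \<bar>?l ! i\<bar> \<le> - \<bar>?l ! j\<bar>" using sorted_nth_mono ij by fastforce
  then show ?thesis using nonneg ij by simp
qed

lemma one_in_eigenvalues_by_magnitude:
  assumes "stochastic_mat P" "charpoly P \<noteq> 0"
  shows "1 \<in> set (eigenvalues_by_magnitude (P::real^'m::finite^'m))"
proof -
  have "P *v (\<chi> i. 1) = 1 *\<^sub>R (\<chi> i. 1)"
    using assms(1) by (simp add: vec_eq_iff matrix_vector_mult_def stochastic_mat_def)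
  moreover have "(\<chi> i. 1) \<noteq> (0::real^'m)" by (simp add: vec_eq_iff)
  ultimately show ?thesis using eigenvalues_by_magnitude_mem[OF assms(2)] by blast
qed

lemma eigenvalue_le_lambda2:
  fixes P :: "real^'m::finite^'m"
  assumes sym: "symmetric_mat P" and st: "stochastic_mat P" and irr: "irreducible_mat P"
    and psd: "psd_mat P" and v: "v \<noteq> 0" "P *v v = r *\<^sub>R v" and "r < 1"
  shows "r \<le> lambda2 P"
proof -
  let ?l = "eigenvalues_by_magnitude P"
  have cp: "charpoly P \<noteq> 0" by (rule charpoly_simple_root_1[OF sym st irr])
  obtain k where k: "k < length ?l" "?l ! k = r"
    using v eigenvalues_by_magnitude_mem[OF cp] by (metis in_set_conv_nth)
  obtain k1 where k1: "k1 < length ?l" "?l ! k1 = 1"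
    using one_in_eigenvalues_by_magnitude[OF st cp] by (metis in_set_conv_nth)
  have "k \<noteq> 0"
  proof
    assume "k = 0"
    then show False
      using eigenvalues_by_magnitude_antimono[OF sym st psd cp, of 0 k1] k k1 \<open>r < 1\<close> by simp
  qed
  then show ?thesis
    using eigenvalues_by_magnitude_antimono[OF sym st psd cp, of 1 k] k by (simp add: lambda2_def)
qed

lemma lambda2_lt_1:
  fixes P :: "real^'m::finite^'m"
  assumes sym: "symmetric_mat P" and st: "stochastic_mat P" and irr: "irreducible_mat P"
    and psd: "psd_mat P" and m2: "CARD('m) \<ge> 2"
  shows "lambda2 P < 1"
proof (rule ccontr)
  assume "\<not> lambda2 P < 1"
  let ?l = "eigenvalues_by_magnitude P"
  have cp: "charpoly P \<noteq> 0" and one: "count (mset ?l) 1 = 1"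
    using charpoly_simple_root_1[OF sym st irr] by (simp_all add: eigenvalues_by_magnitude_def)
  have le1: "?l ! k \<le> 1" if "k < length ?l" for k
    using nth_mem[OF that] eigenvalue_range(2)[OF sym st psd] eigenvalues_by_magnitude_mem[OF cp] by blast
  obtain \<mu> v0 where "v0 \<noteq> 0" "P *v v0 = \<mu> *\<^sub>R v0" "\<mu> < 1"
    using spectral_gap_rayleigh[OF sym st irr m2] by metis
  then have "\<mu> \<in> set ?l" "\<mu> \<noteq> 1" using eigenvalues_by_magnitude_mem[OF cp] by auto
  then have "card {1, \<mu>} \<le> card (set ?l)"
    using one_in_eigenvalues_by_magnitude[OF st cp] by (intro card_mono) auto
  then have "1 < length ?l" using card_length[of ?l] \<open>\<mu> \<noteq> 1\<close> by simp
  then have "?l ! 1 = 1" "?l ! 0 = 1"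
    using \<open>\<not> lambda2 P < 1\<close> le1 eigenvalues_by_magnitude_antimono[OF sym st psd cp, of 0 1]
    by (force simp: lambda2_def)+
  then have "?l = 1 # 1 # drop 2 ?l"
    using Cons_nth_drop_Suc[of 0 ?l] Cons_nth_drop_Suc[of 1 ?l] \<open>1 < length ?l\<close>
    by (simp add: numeral_2_eq_2 flip: length_greater_0_conv)
  then have "count (mset ?l) 1 = count (mset (1 # 1 # drop 2 ?l)) 1" by (rule arg_cong)
  then show False using one by simp
qed

lemma lambda2_spectral_gap:
  fixes P :: "real^'m::finite^'m"
  assumes sym: "symmetric_mat P" and st: "stochastic_mat P" and irr: "irreducible_mat P"
    and psd: "psd_mat P" and m2: "CARD('m) \<ge> 2" and v: "(\<Sum>i\<in>UNIV. v$i) = 0"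
  shows "(1 - lambda2 P) * (v \<bullet> v) \<le> v \<bullet> (v - P *v v)"
proof -
  obtain \<mu> v0 where "v0 \<noteq> 0" "P *v v0 = \<mu> *\<^sub>R v0" "\<mu> < 1"
    and gap: "\<And>v. (\<Sum>i\<in>UNIV. v$i) = 0 \<Longrightarrow> v \<bullet> (P *v v) \<le> \<mu> * (v \<bullet> v)"
    using spectral_gap_rayleigh[OF sym st irr m2] by metis
  then have "\<mu> \<le> lambda2 P" by (intro eigenvalue_le_lambda2[OF sym st irr psd])
  then have "(1 - lambda2 P) * (v \<bullet> v) \<le> (1 - \<mu>) * (v \<bullet> v)" by (intro mult_right_mono) auto
  also have "\<dots> \<le> v \<bullet> (v - P *v v)" using gap[OF v] by (simp add: inner_diff_right algebra_simps)
  finally show ?thesis .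
qed

lemma laplacian_solvable:
  fixes P :: "real^'m::finite^'m"
  assumes sym: "symmetric_mat P" and st: "stochastic_mat P" and irr: "irreducible_mat P"
    and psd: "psd_mat P" and m2: "CARD('m) \<ge> 2" and w: "(\<Sum>i\<in>UNIV. w$i) = 0"
  obtains \<nu> where "\<nu> - P *v \<nu> = w" "(1 - lambda2 P) * norm \<nu> \<le> norm w"
proof -
  have inj: "inj ((*v) (shifted_laplacian P))"
    using shifted_laplacian_inj[OF sym st irr]
    by (simp add: linear_injective_0[OF matrix_vector_mul_linear])
  have "surj ((*v) (shifted_laplacian P))"
    by (rule linear_injective_imp_surjective[OF matrix_vector_mul_linear inj]) simp
  then obtain \<nu> where \<nu>: "shifted_laplacian P *v \<nu> = w" by (metis surjD)
  have S: "(\<Sum>i\<in>UNIV. \<nu>$i) = 0" using sum_shifted_laplacian_mult[OF sym st, of \<nu>] \<nu> w by simp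
  then have eq: "\<nu> - P *v \<nu> = w" using \<nu> unfolding shifted_laplacian_mult by simp
  have "(1 - lambda2 P) * (norm \<nu> * norm \<nu>) \<le> \<nu> \<bullet> w"
    using lambda2_spectral_gap[OF sym st irr psd m2 S] eq by (simp add: norm_eq_sqrt_inner)
  also have "\<dots> \<le> norm \<nu> * norm w" by (rule norm_cauchy_schwarz)
  finally have "norm \<nu> * ((1 - lambda2 P) * norm \<nu>) \<le> norm \<nu> * norm w" by (simp add: algebra_simps)
  then have "(1 - lambda2 P) * norm \<nu> \<le> norm w"
    by (cases "norm \<nu> = 0") (auto simp: mult_le_cancel_left_pos)
  with eq show ?thesis using that by blast
qed

lemma laplacian_solvable_stacked:
  fixes P :: "real^'m::finite^'m" and W :: "(real^'n)^'m"
  assumes sym: "symmetric_mat P" and st: "stochastic_mat P" and irr: "irreducible_mat P"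
    and psd: "psd_mat P" and m2: "CARD('m) \<ge> 2" and W: "(\<Sum>i\<in>UNIV. W$i) = 0"
  obtains V where "V - mix P V = W" "(1 - lambda2 P) * norm V \<le> norm W"
proof -
  define Wk where "Wk k = (\<chi> i. W$i$k)" for k
  have "(\<Sum>i\<in>UNIV. Wk k $ i) = 0" for k
    using arg_cong[OF W, of "\<lambda>v. v$k"] by (simp add: Wk_def sum_component)
  then have "\<forall>k. \<exists>\<nu>. \<nu> - P *v \<nu> = Wk k \<and> (1 - lambda2 P) * norm \<nu> \<le> norm (Wk k)"
    by (metis laplacian_solvable[OF sym st irr psd m2])
  then obtain \<nu> where \<nu>: "\<And>k. \<nu> k - P *v \<nu> k = Wk k"
    "\<And>k. (1 - lambda2 P) * norm (\<nu> k) \<le> norm (Wk k)" by metis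
  define V where "V = (\<chi> i k. \<nu> k $ i)"
  have "V - mix P V = W"
    using \<nu>(1) by (simp add: vec_eq_iff V_def Wk_def matrix_vector_mult_def sum_component)
  moreover have "((1 - lambda2 P) * norm V)^2 \<le> (norm W)^2"
  proof -
    have transp: "(norm X)^2 = (\<Sum>k\<in>UNIV. (norm (\<chi> i. X$i$k))^2)" for X :: "(real^'n)^'m"
    proof -
      have "(norm X)^2 = (\<Sum>i\<in>UNIV. \<Sum>k\<in>UNIV. (X$i$k)^2)"
        unfolding power2_norm_vec[of X] by (simp add: power2_norm_real_vec)
      also have "\<dots> = (\<Sum>k\<in>UNIV. \<Sum>i\<in>UNIV. (X$i$k)^2)" by (rule sum.swap)
      finally show ?thesis by (simp add: power2_norm_real_vec)
    qed
    have "((1 - lambda2 P) * norm (\<nu> k))^2 \<le> (norm (Wk k))^2" for k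
      using \<nu>(2)[of k] lambda2_lt_1[OF sym st irr psd m2] by (intro power_mono) auto
    then show ?thesis
      unfolding power_mult_distrib transp[of V] transp[of W] sum_distrib_left
      by (intro sum_mono) (simp add: V_def Wk_def vec_lambda_eta power_mult_distrib)
  qed
  then have "(1 - lambda2 P) * norm V \<le> norm W" by (simp add: power2_le_iff_abs_le)
  ultimately show ?thesis using that by blast
qed

section \<open>The entropic primal-dual consensus method\<close>

locale entropic_consensus =
  fixes P :: "real^'m::finite^'m" and f :: "'m \<Rightarrow> real^'n::finite \<Rightarrow> ereal"
    and rho tau :: real and delta :: "'m \<Rightarrow> real"
    and x y nu :: "nat \<Rightarrow> 'm \<Rightarrow> real^'n"
  assumes sym: "symmetric_mat P" and st: "stochastic_mat P" and psd: "psd_mat P"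
    and convex_f: "\<And>i. convex_fun (f i)" and proper_f: "\<And>i. proper_fun (f i)"
    and dom_f: "\<And>i. \<exists>w \<in> prob_simplex \<inter> posorth. f i w \<noteq> \<infinity>"
    and rho: "0 < rho" and tau: "tau = rho / 2" and delta: "\<And>i. 0 \<le> delta i"
    and nu0: "nu 0 = (\<lambda>i. 0)" and x0: "x 0 = (\<lambda>i. \<chi> k. 1 / real CARD('n))"
    and y_step: "\<And>t i. y t i \<in> prob_simplex \<and>
        (\<forall>z\<in>prob_simplex. (\<Sum>j\<in>UNIV. P$i$j * bregman (y t i) (x t j))
                      \<le> (\<Sum>j\<in>UNIV. P$i$j * bregman z (x t j)))"
    and x_step: "\<And>t i. x (Suc t) i \<in> prob_simplex \<and>
        (\<forall>z\<in>prob_simplex.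
           f i (x (Suc t) i) + ereal (x (Suc t) i \<bullet> (nu t i - (\<Sum>j\<in>UNIV. P$i$j *\<^sub>R nu t j))
              + rho * bregman (x (Suc t) i) (y t i) + delta i * bregman (x (Suc t) i) (x t i))
           \<le> f i z + ereal (z \<bullet> (nu t i - (\<Sum>j\<in>UNIV. P$i$j *\<^sub>R nu t j))
              + rho * bregman z (y t i) + delta i * bregman z (x t i)))"
    and nu_step: "\<And>t i. nu (Suc t) i = nu t i + tau *\<^sub>R x (Suc t) i
                           - tau *\<^sub>R (\<Sum>j\<in>UNIV. P$i$j *\<^sub>R x (Suc t) j)"
begin

lemma tau_pos: "0 < tau"
  using rho tau by simp

definition X :: "nat \<Rightarrow> (real^'n)^'m" where "X t = (\<chi> i. x t i)"

lemma X_nth [simp]: "X t $ i = x t i"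
  by (simp add: X_def)

definition Nu :: "nat \<Rightarrow> (real^'n)^'m" where "Nu t = (\<chi> i. nu t i)"

definition F :: "'m \<Rightarrow> real^'n \<Rightarrow> real" where "F i v = real_of_ereal (f i v)"

definition energy :: "real^'n \<Rightarrow> nat \<Rightarrow> real" where
  "energy c t = (\<Sum>i\<in>UNIV. (rho + delta i) * bregman c (x t i))"

lemma Nu_Suc: "Nu (Suc t) = Nu t + tau *\<^sub>R (X (Suc t) - mix P (X (Suc t)))"
  by (simp add: vec_eq_iff Nu_def X_def nu_step algebra_simps scaleR_sum_right)

lemma x_prox:
  "is_entropic_prox (f i) ((Nu t - mix P (Nu t))$i - rho *\<^sub>R negent_grad (y t i)
     - delta i *\<^sub>R negent_grad (x t i)) (rho + delta i) (x (Suc t) i)"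
  using x_step[of t i] by (intro is_entropic_prox_bregman_step) (simp_all add: Nu_def)

lemma x_in_simplex: "x t i \<in> prob_simplex"
  by (cases t) (use x0 uniform_in_prob_simplex x_step in auto)

lemma x_pos: "x t i \<in> posorth"
proof (cases t)
  case (Suc s)
  obtain w where "w \<in> prob_simplex" "w \<in> posorth" "f i w \<noteq> \<infinity>" using dom_f[of i] by blast
  from entropic_prox_pos[OF convex_f proper_f _ this x_prox] rho delta[of i] Suc show ?thesis
    by simp
qed (use x0 uniform_in_prob_simplex in auto)

lemma f_x_finite: "f i (x (Suc t) i) = ereal (F i (x (Suc t) i))"
proof -
  obtain w where "w \<in> prob_simplex" "f i w \<noteq> \<infinity>" using dom_f[of i] by blast
  from entropic_prox_finite[OF proper_f x_prox this] show ?thesis by (simp add: F_def)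
qed

lemma y_pythagoras:
  "z \<in> prob_simplex \<Longrightarrow> (\<Sum>j\<in>UNIV. P$i$j * bregman z (x t j))
     = bregman z (y t i) + (\<Sum>j\<in>UNIV. P$i$j * bregman (y t i) (x t j))"
  using st y_step[of t i] by (intro bregman_barycenter(2)) (auto simp: stochastic_mat_def)

lemma x_three_point:
  assumes "z \<in> prob_simplex" "f i z = ereal Fz"
  shows "F i (x (Suc t) i) + x (Suc t) i \<bullet> (Nu t - mix P (Nu t))$i
      + rho * bregman (x (Suc t) i) (y t i) + delta i * bregman (x (Suc t) i) (x t i)
      + (rho + delta i) * bregman z (x (Suc t) i)
    \<le> Fz + z \<bullet> (Nu t - mix P (Nu t))$i + rho * bregman z (y t i) + delta i * bregman z (x t i)"
proof -
  let ?a = "(Nu t - mix P (Nu t))$i"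
  have "F i (x (Suc t) i) + (x (Suc t) i \<bullet> (?a - rho *\<^sub>R negent_grad (y t i) - delta i *\<^sub>R negent_grad (x t i))
      + (rho + delta i) * negent (x (Suc t) i)) + (rho + delta i) * bregman z (x (Suc t) i)
    \<le> Fz + (z \<bullet> (?a - rho *\<^sub>R negent_grad (y t i) - delta i *\<^sub>R negent_grad (x t i))
      + (rho + delta i) * negent z)"
    using entropic_prox_three_point[OF convex_f _ x_prox x_pos f_x_finite assms] rho delta[of i]
    by (simp add: add.assoc)
  then show ?thesis
    using bregman_prox_objective_eq[of z ?a rho "y t i" "delta i" "x t i"]
      bregman_prox_objective_eq[of "x (Suc t) i" ?a rho "y t i" "delta i" "x t i"] by linarith
qed

lemma local_descent:
  assumes cS: "c \<in> prob_simplex" and fc: "f i c = ereal (F i c)"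
  shows "(F i (x (Suc t) i) - F i c) + (x (Suc t) i - c) \<bullet> (Nu t - mix P (Nu t))$i
      + rho / 2 * (\<Sum>j\<in>UNIV. P$i$j * (norm (x (Suc t) i - x t j))^2)
      + (rho + delta i) * bregman c (x (Suc t) i)
    \<le> rho * (\<Sum>j\<in>UNIV. P$i$j * bregman c (x t j)) + delta i * bregman c (x t i)"
proof -
  let ?x = "x (Suc t) i"
  have "P$i$j * ((norm (?x - x t j))^2 / 2) \<le> P$i$j * bregman ?x (x t j)" for j
    using st by (intro mult_left_mono bregman_ge_half_sqdist) (auto simp: stochastic_mat_def x_in_simplex x_pos)
  then have "(\<Sum>j\<in>UNIV. P$i$j * (norm (?x - x t j))^2) / 2 \<le> (\<Sum>j\<in>UNIV. P$i$j * bregman ?x (x t j))"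
    unfolding sum_divide_distrib by (intro sum_mono) simp
  then have "rho * ((\<Sum>j\<in>UNIV. P$i$j * (norm (?x - x t j))^2) / 2)
      \<le> rho * (\<Sum>j\<in>UNIV. P$i$j * bregman ?x (x t j))" using rho by simp
  moreover have "0 \<le> delta i * bregman ?x (x t i)"
    using delta[of i] by (simp add: bregman_nonneg x_in_simplex x_pos)
  moreover have "rho * bregman c (y t i) = rho * (\<Sum>j\<in>UNIV. P$i$j * bregman c (x t j))
      - rho * (\<Sum>j\<in>UNIV. P$i$j * bregman (y t i) (x t j))"
    using y_pythagoras[OF cS, of i t] by (simp add: algebra_simps)
  moreover have "rho * bregman ?x (y t i) = rho * (\<Sum>j\<in>UNIV. P$i$j * bregman ?x (x t j))
      - rho * (\<Sum>j\<in>UNIV. P$i$j * bregman (y t i) (x t j))"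
    using y_pythagoras[OF x_in_simplex[of "Suc t" i], of i t] by (simp add: algebra_simps)
  ultimately show ?thesis using x_three_point[OF cS fc, of t]
    by (simp add: inner_diff_left)
qed

lemma energy_nonneg: "c \<in> prob_simplex \<Longrightarrow> 0 \<le> energy c t"
  unfolding energy_def using rho delta
  by (intro sum_nonneg mult_nonneg_nonneg) (auto intro: bregman_nonneg x_in_simplex x_pos add_nonneg_nonneg)

lemma energy_eq_sum_weighted:
  "energy c t = (\<Sum>i\<in>UNIV. rho * (\<Sum>j\<in>UNIV. P$i$j * bregman c (x t j)) + delta i * bregman c (x t i))"
proof -
  have "(\<Sum>i\<in>UNIV. \<Sum>j\<in>UNIV. P$i$j * bregman c (x t j)) = (\<Sum>j\<in>UNIV. \<Sum>i\<in>UNIV. P$i$j * bregman c (x t j))"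
    by (rule sum.swap)
  also have "\<dots> = (\<Sum>j\<in>UNIV. bregman c (x t j))"
    using stochastic_column_sum[OF sym st] by (simp add: sum_distrib_right[symmetric])
  finally show ?thesis
    by (simp add: energy_def sum.distrib distrib_right sum_distrib_left[symmetric])
qed

lemma primal_descent:
  assumes cS: "c \<in> prob_simplex" and fc: "\<And>i. f i c = ereal (F i c)"
  shows "(\<Sum>i\<in>UNIV. F i (x (Suc t) i) - F i c) + (X (Suc t) - mix P (X (Suc t))) \<bullet> Nu t
      + rho / 4 * (norm (X (Suc t) - mix P (X (Suc t))))^2 + energy c (Suc t) \<le> energy c t"
proof -
  let ?X = "X (Suc t)" and ?C = "(\<chi> i. c) :: (real^'n)^'m"
  have "(\<Sum>i\<in>UNIV. (x (Suc t) i - c) \<bullet> (Nu t - mix P (Nu t))$i) = (?X - ?C) \<bullet> (Nu t - mix P (Nu t))"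
    unfolding inner_vec_def[of "?X - ?C"] by simp
  also have "\<dots> = ((?X - ?C) - mix P (?X - ?C)) \<bullet> Nu t"
    using inner_mix_commute[OF sym, of "?X - ?C" "Nu t"] by (simp add: inner_diff_left inner_diff_right)
  also have "(?X - ?C) - mix P (?X - ?C) = ?X - mix P ?X"
    by (simp add: linear_diff[OF linear_mix] mix_const[OF st])
  finally have inner: "(\<Sum>i\<in>UNIV. (x (Suc t) i - c) \<bullet> (Nu t - mix P (Nu t))$i)
      = (?X - mix P ?X) \<bullet> Nu t" .
  have "(norm (?X - mix P ?X))^2 \<le> 2 * (\<Sum>i\<in>UNIV. \<Sum>j\<in>UNIV. P$i$j * (norm (?X$i - X t $ j))^2)"
    using power2_norm_laplacian_le[OF sym st, of ?X] inner_laplacian_le_cross_dist[OF sym st psd, of ?X "X t"]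
    by linarith
  then have "rho / 4 * (norm (?X - mix P ?X))^2
      \<le> rho / 4 * (2 * (\<Sum>i\<in>UNIV. \<Sum>j\<in>UNIV. P$i$j * (norm (x (Suc t) i - x t j))^2))"
    using rho by (intro mult_left_mono) auto
  also have "\<dots> = (\<Sum>i\<in>UNIV. rho / 2 * (\<Sum>j\<in>UNIV. P$i$j * (norm (x (Suc t) i - x t j))^2))"
    by (simp add: sum_distrib_left)
  finally have cross: "rho / 4 * (norm (?X - mix P ?X))^2
      \<le> (\<Sum>i\<in>UNIV. rho / 2 * (\<Sum>j\<in>UNIV. P$i$j * (norm (x (Suc t) i - x t j))^2))" .
  have "(\<Sum>i\<in>UNIV. (F i (x (Suc t) i) - F i c) + (x (Suc t) i - c) \<bullet> (Nu t - mix P (Nu t))$i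
      + rho / 2 * (\<Sum>j\<in>UNIV. P$i$j * (norm (x (Suc t) i - x t j))^2)
      + (rho + delta i) * bregman c (x (Suc t) i)) \<le> energy c t"
    unfolding energy_eq_sum_weighted by (intro sum_mono local_descent[OF cS fc])
  then show ?thesis using inner cross by (simp add: sum.distrib energy_def)
qed

lemma primal_dual_descent:
  assumes cS: "c \<in> prob_simplex" and fc: "\<And>i. f i c = ereal (F i c)"
  shows "2 * tau * ((\<Sum>i\<in>UNIV. F i (x (Suc t) i) - F i c)
        + (X (Suc t) - mix P (X (Suc t))) \<bullet> V + energy c (Suc t))
      + (norm (Nu (Suc t) - V))^2 \<le> 2 * tau * energy c t + (norm (Nu t - V))^2"
proof -
  define r where "r = X (Suc t) - mix P (X (Suc t))"
  define gap where "gap = (\<Sum>i\<in>UNIV. F i (x (Suc t) i) - F i c)"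
  have "(norm (Nu (Suc t) - V))^2
      = (norm (Nu t - V))^2 + 2 * tau * (r \<bullet> Nu t) - 2 * tau * (r \<bullet> V) + tau^2 * (norm r)^2"
    unfolding Nu_Suc r_def[symmetric] power2_norm_eq_inner
    by (simp add: inner_add_left inner_add_right inner_diff_left inner_diff_right
        inner_commute power2_eq_square algebra_simps)
  moreover have "2 * tau * (gap + r \<bullet> Nu t + rho / 4 * (norm r)^2 + energy c (Suc t)) \<le> 2 * tau * energy c t"
    using primal_descent[OF cS fc, of t] tau rho unfolding r_def[symmetric] gap_def
    by (intro mult_left_mono) auto
  moreover have "2 * tau * (rho / 4 * (norm r)^2) = tau^2 * (norm r)^2" using tau by (simp add: power2_eq_square)
  ultimately show ?thesis unfolding r_def[symmetric] gap_def[symmetric] distrib_left by linarith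
qed

lemma telescoped_descent:
  assumes cS: "c \<in> prob_simplex" and fc: "\<And>i. f i c = ereal (F i c)"
  shows "2 * tau * (\<Sum>t<T. (\<Sum>i\<in>UNIV. F i (x (Suc t) i) - F i c)
           + (X (Suc t) - mix P (X (Suc t))) \<bullet> V)
      \<le> 2 * tau * energy c 0 + (norm V)^2"
proof -
  define \<Psi> where "\<Psi> t = 2 * tau * energy c t + (norm (Nu t - V))^2" for t
  have "2 * tau * ((\<Sum>i\<in>UNIV. F i (x (Suc t) i) - F i c) + (X (Suc t) - mix P (X (Suc t))) \<bullet> V)
      \<le> \<Psi> t - \<Psi> (Suc t)" for t
    using primal_dual_descent[OF cS fc, of t V] unfolding \<Psi>_def by (simp add: algebra_simps)
  then have "2 * tau * (\<Sum>t<T. (\<Sum>i\<in>UNIV. F i (x (Suc t) i) - F i c)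
           + (X (Suc t) - mix P (X (Suc t))) \<bullet> V) \<le> (\<Sum>t<T. \<Psi> t - \<Psi> (Suc t))"
    unfolding sum_distrib_left by (rule sum_mono)
  also have "\<dots> = \<Psi> 0 - \<Psi> T" by (rule sum_lessThan_telescope')
  also have "\<dots> \<le> \<Psi> 0"
  proof -
    have "0 \<le> 2 * tau * energy c T" using energy_nonneg[OF cS, of T] rho tau by simp
    then show ?thesis unfolding \<Psi>_def using zero_le_power2[of "norm (Nu T - V)"] by linarith
  qed
  also have "\<Psi> 0 = 2 * tau * energy c 0 + (norm V)^2" by (simp add: \<Psi>_def Nu_def nu0 flip: zero_vec_def)
  finally show ?thesis .
qed

definition Xbar :: "nat \<Rightarrow> (real^'n)^'m" where "Xbar T = (1 / real T) *\<^sub>R (\<Sum>t = 1..T. X t)"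

lemma Xbar_nth: "Xbar T $ i = (1 / real T) *\<^sub>R (\<Sum>t = 1..T. x t i)"
  by (simp add: Xbar_def sum_component)

lemma Xbar_eq_average: "Xbar T = (\<Sum>t<T. (1 / real T) *\<^sub>R X (Suc t))"
  by (simp add: Xbar_def sum.atLeast1_atMost_eq scaleR_sum_right)

lemma Xbar_in_simplex_and_bound:
  assumes "1 \<le> T"
  shows "Xbar T $ i \<in> prob_simplex"
    and "f i (Xbar T $ i) = ereal (F i (Xbar T $ i))"
    and "F i (Xbar T $ i) \<le> (\<Sum>t<T. 1 / real T * F i (x (Suc t) i))"
proof -
  have w: "(\<Sum>t<T. 1 / real T) = 1" "\<And>t. 0 \<le> 1 / real T" using assms by auto
  have avg: "Xbar T $ i = (\<Sum>t<T. (1 / real T) *\<^sub>R x (Suc t) i)"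
    by (simp add: Xbar_eq_average sum_component)
  show "Xbar T $ i \<in> prob_simplex"
    unfolding avg by (rule convex_sum[OF _ convex_prob_simplex w(1)]) (auto simp: x_in_simplex)
  have le: "f i (Xbar T $ i) \<le> ereal (\<Sum>t<T. 1 / real T * F i (x (Suc t) i))"
    unfolding avg by (rule convex_fun_sum_le[OF convex_f _ w(1)]) (auto simp: f_x_finite)
  moreover have "f i (Xbar T $ i) \<noteq> -\<infinity>" using proper_f[of i] by (simp add: proper_fun_def)
  ultimately show fin: "f i (Xbar T $ i) = ereal (F i (Xbar T $ i))"
    by (cases "f i (Xbar T $ i)") (auto simp: F_def)
  from le show "F i (Xbar T $ i) \<le> (\<Sum>t<T. 1 / real T * F i (x (Suc t) i))" by (simp add: fin)
qed

lemma ergodic_bound: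
  assumes cS: "c \<in> prob_simplex" and fc: "\<And>i. f i c = ereal (F i c)" and T: "1 \<le> T"
  shows "(\<Sum>i\<in>UNIV. F i (Xbar T $ i) - F i c) + (Xbar T - mix P (Xbar T)) \<bullet> V
    \<le> (energy c 0 + (norm V)^2 / (2 * tau)) / real T"
proof -
  have "F i (Xbar T $ i) - F i c \<le> (\<Sum>t<T. 1 / real T * (F i (x (Suc t) i) - F i c))" for i
    using Xbar_in_simplex_and_bound(3)[OF T, of i] T by (simp add: right_diff_distrib sum_subtractf)
  then have "(\<Sum>i\<in>UNIV. F i (Xbar T $ i) - F i c)
      \<le> (\<Sum>i\<in>UNIV. \<Sum>t<T. 1 / real T * (F i (x (Suc t) i) - F i c))" by (rule sum_mono)
  also have "\<dots> = (\<Sum>t<T. \<Sum>i\<in>UNIV. F i (x (Suc t) i) - F i c) / real T"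
    by (subst sum.swap) (simp add: sum_divide_distrib sum_distrib_left)
  finally have gap: "(\<Sum>i\<in>UNIV. F i (Xbar T $ i) - F i c)
      \<le> (\<Sum>t<T. \<Sum>i\<in>UNIV. F i (x (Suc t) i) - F i c) / real T" .
  have "Xbar T - mix P (Xbar T) = (\<Sum>t<T. (1 / real T) *\<^sub>R (X (Suc t) - mix P (X (Suc t))))"
    by (simp add: Xbar_eq_average linear_sum[OF linear_mix] linear_cmul[OF linear_mix]
        scaleR_diff_right sum_subtractf)
  then have "(Xbar T - mix P (Xbar T)) \<bullet> V = (\<Sum>t<T. (X (Suc t) - mix P (X (Suc t))) \<bullet> V) / real T"
    by (simp add: inner_sum_left sum_divide_distrib)
  with gap have "(\<Sum>i\<in>UNIV. F i (Xbar T $ i) - F i c) + (Xbar T - mix P (Xbar T)) \<bullet> V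
      \<le> (\<Sum>t<T. (\<Sum>i\<in>UNIV. F i (x (Suc t) i) - F i c) + (X (Suc t) - mix P (X (Suc t))) \<bullet> V) / real T"
    by (simp add: sum.distrib add_divide_distrib)
  also have "\<dots> \<le> (energy c 0 + (norm V)^2 / (2 * tau)) / real T"
    using telescoped_descent[OF cS fc, where T = T and V = V] rho tau T
    by (intro divide_right_mono) (auto simp: field_simps)
  finally show ?thesis .
qed

lemma delta_le_Max: "delta i \<le> Max (range delta)"
  by (rule Max_ge) auto

lemma Max_delta_nonneg: "0 \<le> Max (range delta)"
  using delta_le_Max[of undefined] delta[of undefined] by linarith

lemma energy_0_le:
  assumes "c \<in> prob_simplex"
  shows "energy c 0 \<le> real CARD('m) * (rho + Max (range delta)) * ln (real CARD('n))"
proof -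
  have "(rho + delta i) * bregman c (x 0 i) \<le> (rho + Max (range delta)) * ln (real CARD('n))" for i
  proof (rule mult_mono)
    show "rho + delta i \<le> rho + Max (range delta)" using delta_le_Max by simp
    show "bregman c (x 0 i) \<le> ln (real CARD('n))" unfolding x0 by (rule bregman_uniform_le_ln[OF assms])
    show "0 \<le> rho + Max (range delta)" using rho Max_delta_nonneg by linarith
    show "0 \<le> bregman c (x 0 i)" by (rule bregman_nonneg[OF assms x_in_simplex x_pos])
  qed
  then have "energy c 0 \<le> (\<Sum>i\<in>(UNIV::'m set). (rho + Max (range delta)) * ln (real CARD('n)))"
    unfolding energy_def by (rule sum_mono)
  then show ?thesis by simp
qed

lemma objective_bound:
  assumes "c \<in> prob_simplex" "\<And>i. f i c = ereal (F i c)" "1 \<le> T"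
  shows "(\<Sum>i\<in>UNIV. F i (Xbar T $ i) - F i c)
    \<le> real CARD('m) * (rho + Max (range delta)) * ln (real CARD('n)) / real T"
proof -
  have "energy c 0 / real T \<le> real CARD('m) * (rho + Max (range delta)) * ln (real CARD('n)) / real T"
    using energy_0_le[OF assms(1)] by (simp add: divide_right_mono)
  with ergodic_bound[OF assms, of 0] show ?thesis by simp
qed

lemma power2_norm_laplacian_Xbar_le:
  assumes "1 \<le> T"
  shows "(norm (Xbar T - mix P (Xbar T)))^2 \<le> 2 * real CARD('m)"
  using power2_norm_laplacian_simplex_le[OF st] Xbar_in_simplex_and_bound(1)[OF assms] by blast

lemma laplacian_Xbar_eq_0_if_CARD_1:
  assumes "1 \<le> T" "CARD('n) = 1"
  shows "Xbar T - mix P (Xbar T) = 0"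
proof -
  obtain k0 :: 'n where UNIV_eq: "UNIV = {k0}" using assms(2) card_1_singletonE by blast
  have "Xbar T $ i $ k0 = 1" for i
    using prob_simplex_sum[OF Xbar_in_simplex_and_bound(1)[OF assms(1)], of i] by (simp add: UNIV_eq)
  then have "Xbar T $ i = Xbar T $ j" for i j
    unfolding vec_eq_iff using UNIV_eq by (metis UNIV_I singletonD)
  then have "Xbar T = (\<chi> i. Xbar T $ undefined)" by (simp add: vec_eq_iff)
  then show ?thesis using mix_const[OF st, of "Xbar T $ undefined"] by simp
qed

end

lemma ergodic_feasibility_arith:
  fixes R N E \<tau> T \<kappa> L Q :: real
  assumes \<tau>: "0 < \<tau>" and T2: "2 \<le> T" and R0: "0 \<le> R" and N0: "0 \<le> N" and E0: "0 \<le> E"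
    and h: "\<kappa> * R \<le> (E + (2 * N + 2 * \<kappa>^2 * R) / (2 * \<tau>)) / T" and \<kappa>: "\<kappa> = \<tau> * T / 2"
    and NL: "N \<le> L" and EQ: "E \<le> Q"
  shows "R / 2 \<le> L / (\<tau>^2 * T) + 2 * Q / (\<tau> * T)"
proof -
  have "0 < T" using T2 by simp
  have "\<kappa> * R * T \<le> E + (2 * N + 2 * \<kappa>^2 * R) / (2 * \<tau>)" using h \<open>0 < T\<close> by (simp add: le_divide_eq)
  then have "\<kappa> * R * T * \<tau> \<le> E * \<tau> + N + \<kappa>^2 * R" using \<tau> by (simp add: field_simps)
  then have "(\<tau>^2 * T^2 / 4) * R \<le> E * \<tau> + N" unfolding \<kappa> by (simp add: power2_eq_square field_simps)
  then have "R \<le> 4 * (E * \<tau> + N) / (\<tau>^2 * T^2)" using \<tau> \<open>0 < T\<close> by (simp add: field_simps)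
  then have "R / 2 \<le> 2 * E / (\<tau> * T^2) + 2 * N / (\<tau>^2 * T^2)"
    using \<tau> \<open>0 < T\<close> by (simp add: field_simps power2_eq_square)
  also have "2 * E / (\<tau> * T^2) \<le> 2 * Q / (\<tau> * T)"
  proof -
    have "2 * E / (\<tau> * T^2) = (2 * E / (\<tau> * T)) / T" by (simp add: power2_eq_square)
    also have "\<dots> \<le> (2 * E / (\<tau> * T)) / 1" by (rule divide_left_mono) (use T2 E0 \<tau> in auto)
    also have "\<dots> \<le> 2 * Q / (\<tau> * T)" using EQ \<tau> \<open>0 < T\<close> by (simp add: divide_right_mono)
    finally show ?thesis .
  qed
  also have "2 * N / (\<tau>^2 * T^2) \<le> L / (\<tau>^2 * T)"
  proof -
    have "2 * N / (\<tau>^2 * T^2) = (2 / T) * (N / (\<tau>^2 * T))" by (simp add: power2_eq_square)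
    also have "\<dots> \<le> 1 * (N / (\<tau>^2 * T))" using T2 N0 \<tau> by (intro mult_right_mono) auto
    also have "\<dots> \<le> L / (\<tau>^2 * T)" using NL \<tau> \<open>0 < T\<close> by (simp add: divide_right_mono)
    finally show ?thesis .
  qed
  finally show ?thesis by simp
qed


context entropic_consensus
begin

lemma consensus_violation_bound_long:
  assumes cS: "c \<in> prob_simplex" and fc: "\<And>i. f i c = ereal (F i c)" and T: "2 \<le> T"
    and gap: "lambda2 P < 1"
    and V0: "((1 - lambda2 P) * norm V0)^2 \<le> real CARD('m) * M0"
    and LB: "- ((Xbar T - mix P (Xbar T)) \<bullet> V0) \<le> (\<Sum>i\<in>UNIV. F i (Xbar T $ i) - F i c)"
  shows "1/2 * (norm (Xbar T - mix P (Xbar T)))^2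
    \<le> 4 * real CARD('m) * M0 / (rho^2 * (1 - lambda2 P)^2 * real T)
      + 4 * real CARD('m) * (rho + Max (range delta)) * ln (real CARD('n)) / (rho * real T)"
proof -
  define r where "r = Xbar T - mix P (Xbar T)"
  define m where "m = real CARD('m)"
  define Q where "Q = m * (rho + Max (range delta)) * ln (real CARD('n))"
  define \<kappa> where "\<kappa> = tau * real T / 2"
  have "(norm (V0 + \<kappa> *\<^sub>R r))^2 + (norm (V0 - \<kappa> *\<^sub>R r))^2 = 2 * (norm V0)^2 + 2 * \<kappa>^2 * (norm r)^2"
    unfolding power2_norm_eq_inner
    by (simp add: inner_add_left inner_add_right inner_diff_left inner_diff_right power2_eq_square
        algebra_simps)
  then have par: "(norm (V0 + \<kappa> *\<^sub>R r))^2 \<le> 2 * (norm V0)^2 + 2 * \<kappa>^2 * (norm r)^2"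
    using zero_le_power2[of "norm (V0 - \<kappa> *\<^sub>R r)"] by linarith
  have "\<kappa> * (norm r)^2 \<le> (energy c 0 + (norm (V0 + \<kappa> *\<^sub>R r))^2 / (2 * tau)) / real T"
    using ergodic_bound[OF cS fc, of T "V0 + \<kappa> *\<^sub>R r"] LB T
    unfolding r_def[symmetric] by (simp add: inner_add_right power2_norm_eq_inner)
  also have "\<dots> \<le> (energy c 0 + (2 * (norm V0)^2 + 2 * \<kappa>^2 * (norm r)^2) / (2 * tau)) / real T"
    using par rho tau by (intro divide_right_mono add_left_mono) auto
  finally have h: "\<kappa> * (norm r)^2 \<le> \<dots>" .
  have "(norm V0)^2 \<le> m * M0 / (1 - lambda2 P)^2"
    using V0 gap by (simp add: m_def pos_le_divide_eq power_mult_distrib mult.commute)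
  from ergodic_feasibility_arith[OF tau_pos _ _ _ energy_nonneg[OF cS] h \<kappa>_def this energy_0_le[OF cS]]
  have "(norm r)^2 / 2 \<le> m * M0 / (1 - lambda2 P)^2 / (tau^2 * real T) + 2 * Q / (tau * real T)"
    using T by (simp add: Q_def m_def)
  also have "\<dots> = 4 * m * M0 / (rho^2 * (1 - lambda2 P)^2 * real T) + 4 * Q / (rho * real T)"
  proof -
    obtain d where d: "(1 - lambda2 P)^2 = d" by blast
    have "0 < d" using d gap by auto
    have "rho = 2 * tau" using tau by simp
    then show ?thesis unfolding d using \<open>0 < d\<close> tau_pos T by (simp add: power2_eq_square field_simps)
  qed
  finally show ?thesis by (simp add: r_def Q_def m_def)
qed

lemma consensus_violation_bound_one_step:
  "1/2 * (norm (Xbar 1 - mix P (Xbar 1)))^2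
    \<le> 4 * real CARD('m) * (rho + Max (range delta)) * ln (real CARD('n)) / rho"
proof (cases "CARD('n) = 1")
  case True
  then show ?thesis using laplacian_Xbar_eq_0_if_CARD_1[of 1] by simp
next
  case False
  define m where "m = real CARD('m)"
  have "0 < CARD('n)" by simp
  with False have "2 \<le> real CARD('n)" by linarith
  then have "ln 2 \<le> ln (real CARD('n))" by simp
  then have ln_n: "2/3 \<le> ln (real CARD('n))" using ln2_ge_two_thirds by linarith
  have "1/2 * (norm (Xbar 1 - mix P (Xbar 1)))^2 \<le> m * 1"
    using power2_norm_laplacian_Xbar_le[of 1] by (simp add: m_def)
  also have "\<dots> \<le> m * (4 * ln (real CARD('n)))"
    using ln_n by (intro mult_left_mono) (auto simp: m_def)
  also have "\<dots> \<le> m * (4 * ln (real CARD('n))) * ((rho + Max (range delta)) / rho)"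
  proof -
    have "1 \<le> (rho + Max (range delta)) / rho" using rho Max_delta_nonneg by simp
    moreover have "0 \<le> m * (4 * ln (real CARD('n)))" using ln_n by (simp add: m_def)
    ultimately show ?thesis using mult_left_mono by fastforce
  qed
  also have "\<dots> = 4 * real CARD('m) * (rho + Max (range delta)) * ln (real CARD('n)) / rho"
    by (simp add: m_def)
  finally show ?thesis .
qed

lemma consensus_violation_bound:
  assumes "c \<in> prob_simplex" "\<And>i. f i c = ereal (F i c)" "1 \<le> T" "lambda2 P < 1" "0 \<le> M0"
    "((1 - lambda2 P) * norm V0)^2 \<le> real CARD('m) * M0"
    "- ((Xbar T - mix P (Xbar T)) \<bullet> V0) \<le> (\<Sum>i\<in>UNIV. F i (Xbar T $ i) - F i c)"
  shows "1/2 * (norm (Xbar T - mix P (Xbar T)))^2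
    \<le> 4 * real CARD('m) * M0 / (rho^2 * (1 - lambda2 P)^2 * real T)
      + 4 * real CARD('m) * (rho + Max (range delta)) * ln (real CARD('n)) / (rho * real T)"
proof (cases "2 \<le> T")
  case True
  then show ?thesis using consensus_violation_bound_long assms by blast
next
  case False
  with assms(3) have "T = 1" by simp
  moreover have "0 \<le> 4 * real CARD('m) * M0 / (rho^2 * (1 - lambda2 P)^2 * real T)"
    using assms(5) by simp
  ultimately show ?thesis using consensus_violation_bound_one_step by simp
qed

end

section \<open>Optimality certificates\<close>

lemma power2_norm_centered_le:
  fixes h :: "'m::finite \<Rightarrow> 'a::real_inner"
  shows "(\<Sum>i\<in>UNIV. (norm ((1 / real CARD('m)) *\<^sub>R (\<Sum>j\<in>UNIV. h j) - h i))^2)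
    \<le> (\<Sum>i\<in>UNIV. (norm (h i))^2)"
proof -
  define m where "m = real CARD('m)"
  define hb where "hb = (1 / m) *\<^sub>R (\<Sum>j\<in>UNIV. h j)"
  have "0 < m" by (simp add: m_def)
  have "(\<Sum>i\<in>UNIV. (norm (hb - h i))^2) = m * (hb \<bullet> hb) - 2 * (hb \<bullet> (\<Sum>j\<in>UNIV. h j))
      + (\<Sum>i\<in>UNIV. (norm (h i))^2)"
    by (simp add: power2_norm_eq_inner inner_diff_left inner_diff_right inner_commute sum.distrib
        sum_subtractf inner_sum_right sum_distrib_left m_def)
  also have "hb \<bullet> (\<Sum>j\<in>UNIV. h j) = m * (hb \<bullet> hb)" using \<open>0 < m\<close> by (simp add: hb_def)
  finally show ?thesis using \<open>0 < m\<close> by (simp add: hb_def[symmetric] m_def[symmetric])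
qed

lemma sum_kkt_gradients_normal:
  fixes P :: "real^'m::finite^'m"
  assumes sym: "symmetric_mat P" and st: "stochastic_mat P"
    and g: "\<And>i. g i \<in> normal_cone prob_simplex c" and v: "v \<in> prob_simplex"
  shows "0 \<le> (\<Sum>i\<in>UNIV. - nus i + (\<Sum>j\<in>UNIV. P$i$j *\<^sub>R nus j) - g i) \<bullet> (v - c)"
proof -
  have "(\<Sum>i\<in>UNIV. \<Sum>j\<in>UNIV. P$i$j *\<^sub>R nus j) = (\<Sum>i\<in>UNIV. nus i)"
    using sum_mix[OF sym st, of "\<chi> i. nus i"] by simp
  then have "(\<Sum>i\<in>UNIV. - nus i + (\<Sum>j\<in>UNIV. P$i$j *\<^sub>R nus j) - g i) \<bullet> (v - c)
      = (\<Sum>i\<in>UNIV. g i \<bullet> (c - v))"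
    by (simp add: sum.distrib sum_subtractf sum_negf inner_sum_left inner_diff_right)
  also have "\<dots> \<ge> 0"
  proof (rule sum_nonneg)
    fix i show "0 \<le> g i \<bullet> (c - v)" using g[of i] v by (auto simp: normal_cone_def split: if_splits)
  qed
  finally show ?thesis .
qed

lemma kkt_dual_certificate:
  fixes P :: "real^'m::finite^'m" and f :: "'m \<Rightarrow> real^'n::finite \<Rightarrow> ereal"
  assumes sym: "symmetric_mat P" and st: "stochastic_mat P" and irr: "irreducible_mat P"
    and psd: "psd_mat P" and m2: "CARD('m) \<ge> 2"
    and g: "\<And>i. g i \<in> normal_cone prob_simplex c"
    and hsub: "\<And>i. - nus i + (\<Sum>j\<in>UNIV. P$i$j *\<^sub>R nus j) - g i \<in> subdiff (f i) c"
    and M0: "\<And>i. \<forall>g\<in>subdiff (f i) c. (norm g)^2 \<le> M0"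
  obtains V where "((1 - lambda2 P) * norm V)^2 \<le> real CARD('m) * M0"
    and "\<And>Y. (\<And>i. Y$i \<in> prob_simplex) \<Longrightarrow> (\<And>i. f i (Y$i) \<noteq> \<infinity>) \<Longrightarrow>
           - ((Y - mix P Y) \<bullet> V) \<le> (\<Sum>i\<in>UNIV. real_of_ereal (f i (Y$i)) - real_of_ereal (f i c))"
proof -
  define h where "h i = - nus i + (\<Sum>j\<in>UNIV. P$i$j *\<^sub>R nus j) - g i" for i
  define hb where "hb = (1 / real CARD('m)) *\<^sub>R (\<Sum>j\<in>UNIV. h j)"
  define W :: "(real^'n)^'m" where "W = (\<chi> i. hb - h i)"
  have "(\<Sum>i\<in>UNIV. W$i) = real CARD('m) *\<^sub>R hb - (\<Sum>j\<in>UNIV. h j)"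
    by (simp only: W_def vec_lambda_beta sum_subtractf sum_constant_scaleR)
  also have "\<dots> = 0" by (simp add: hb_def)
  finally have "(\<Sum>i\<in>UNIV. W$i) = 0" .
  then obtain V where V: "V - mix P V = W" "(1 - lambda2 P) * norm V \<le> norm W"
    using laplacian_solvable_stacked[OF sym st irr psd m2] by metis
  have "0 \<le> (1 - lambda2 P) * norm V" using lambda2_lt_1[OF sym st irr psd m2] by simp
  then have "((1 - lambda2 P) * norm V)^2 \<le> (norm W)^2" by (rule power_mono[OF V(2)])
  also have "\<dots> \<le> (\<Sum>i\<in>UNIV. (norm (h i))^2)"
    using power2_norm_centered_le[of h] by (simp add: W_def power2_norm_vec hb_def)
  also have "\<dots> \<le> (\<Sum>i\<in>(UNIV::'m set). M0)" using M0 hsub by (intro sum_mono) (auto simp: h_def)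
  finally have "((1 - lambda2 P) * norm V)^2 \<le> real CARD('m) * M0" by simp
  moreover have "- ((Y - mix P Y) \<bullet> V) \<le> (\<Sum>i\<in>UNIV. real_of_ereal (f i (Y$i)) - real_of_ereal (f i c))"
    if YS: "\<And>i. Y$i \<in> prob_simplex" and Yf: "\<And>i. f i (Y$i) \<noteq> \<infinity>" for Y
  proof -
    define C :: "(real^'n)^'m" where "C = (\<chi> i. c)"
    have sub: "h i \<in> subdiff (f i) c" for i unfolding h_def by (rule hsub)
    have fY: "f i (Y$i) = ereal (real_of_ereal (f i (Y$i)))" for i
      using sub[of i] Yf[of i] by (cases "f i (Y$i)") (auto simp: subdiff_def dest!: spec[of _ "Y$i"])
    have "(\<Sum>i\<in>UNIV. h i \<bullet> (Y$i - c)) \<le> (\<Sum>i\<in>UNIV. real_of_ereal (f i (Y$i)) - real_of_ereal (f i c))"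
      using subgradient_ineq[OF sub fY subdiff_imp_finite[OF sub]] by (intro sum_mono) (simp add: algebra_simps)
    moreover have "0 \<le> (\<Sum>i\<in>UNIV. hb \<bullet> (Y$i - c))"
      using sum_kkt_gradients_normal[OF sym st g YS] by (intro sum_nonneg) (simp add: hb_def h_def)
    moreover have "W \<bullet> (Y - C) = V \<bullet> (Y - mix P Y)"
      using inner_mix_commute[OF sym, of V "Y - C"]
      by (simp add: V(1)[symmetric] inner_diff_left inner_diff_right linear_diff[OF linear_mix]
          C_def mix_const[OF st])
    moreover have "(\<Sum>i\<in>UNIV. h i \<bullet> (Y$i - c)) = (\<Sum>i\<in>UNIV. hb \<bullet> (Y$i - c)) - W \<bullet> (Y - C)"
      unfolding inner_vec_def[of W "Y - C"] by (simp add: W_def C_def inner_diff_left sum_subtractf)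
    ultimately show ?thesis by (simp add: inner_commute)
  qed
  ultimately show ?thesis using that by blast
qed

context entropic_consensus
begin

lemma ergodic_rates:
  assumes cS: "c \<in> prob_simplex" and fc: "\<And>i. f i c \<noteq> \<infinity>" and T: "1 \<le> T"
    and gap: "lambda2 P < 1" and M0: "0 \<le> M0"
    and V0: "((1 - lambda2 P) * norm V0)^2 \<le> real CARD('m) * M0"
    and LB: "\<And>Y. (\<And>i. Y$i \<in> prob_simplex) \<Longrightarrow> (\<And>i. f i (Y$i) \<noteq> \<infinity>) \<Longrightarrow>
      - ((Y - mix P Y) \<bullet> V0) \<le> (\<Sum>i\<in>UNIV. F i (Y$i) - F i c)"
  shows "(\<Sum>i\<in>UNIV. f i (Xbar T $ i)) - (\<Sum>i\<in>UNIV. f i c)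
      \<le> ereal (real CARD('m) * (rho + Max (range delta)) * ln (real CARD('n)) / real T)"
    and "1/2 * (\<Sum>i\<in>UNIV. (norm (Xbar T $ i - (\<Sum>j\<in>UNIV. P$i$j *\<^sub>R Xbar T $ j)))^2)
      \<le> 4 * real CARD('m) * M0 / (rho^2 * (1 - lambda2 P)^2 * real T)
        + 4 * real CARD('m) * (rho + Max (range delta)) * ln (real CARD('n)) / (rho * real T)"
proof -
  have fc': "f i c = ereal (F i c)" for i
    using fc[of i] proper_f[of i] by (cases "f i c") (auto simp: F_def proper_fun_def)
  have "(\<Sum>i\<in>UNIV. f i (Xbar T $ i)) - (\<Sum>i\<in>UNIV. f i c) = ereal (\<Sum>i\<in>UNIV. F i (Xbar T $ i) - F i c)"
    by (simp add: Xbar_in_simplex_and_bound(2)[OF T] fc' sum_ereal sum_subtractf)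
  then show "(\<Sum>i\<in>UNIV. f i (Xbar T $ i)) - (\<Sum>i\<in>UNIV. f i c)
      \<le> ereal (real CARD('m) * (rho + Max (range delta)) * ln (real CARD('n)) / real T)"
    using objective_bound[OF cS fc' T] by simp
  show "1/2 * (\<Sum>i\<in>UNIV. (norm (Xbar T $ i - (\<Sum>j\<in>UNIV. P$i$j *\<^sub>R Xbar T $ j)))^2)
      \<le> 4 * real CARD('m) * M0 / (rho^2 * (1 - lambda2 P)^2 * real T)
        + 4 * real CARD('m) * (rho + Max (range delta)) * ln (real CARD('n)) / (rho * real T)"
  proof -
    have "f i (Xbar T $ i) \<noteq> \<infinity>" for i
      using Xbar_in_simplex_and_bound(2)[OF T, of i] by (metis PInfty_neq_ereal(1))
    from LB[OF Xbar_in_simplex_and_bound(1)[OF T] this]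
    show ?thesis using consensus_violation_bound[OF cS fc' T gap M0 V0]
      by (simp add: power2_norm_vec[of "Xbar T - mix P (Xbar T)"])
  qed
qed

end

lemma consensus_of_mix_fixpoint:
  fixes P :: "real^'m::finite^'m" and z :: "'m \<Rightarrow> real^'n"
  assumes st: "stochastic_mat P" and irr: "irreducible_mat P"
    and fixp: "\<And>i. (\<Sum>j\<in>UNIV. P$i$j *\<^sub>R z j) = z i"
  shows "z i = z j"
proof -
  have "P *v (\<chi> i. z i $ k) = (\<chi> i. z i $ k)" for k
    using fixp by (simp add: vec_eq_iff matrix_vector_mult_def sum_component[symmetric])
  then have "z i $ k = z j $ k" for k
    using stochastic_irreducible_fixpoint_const[OF st irr, of "\<chi> i. z i $ k" i j] by simp
  then show ?thesis by (simp add: vec_eq_iff)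
qed

theorem corollary1:
  fixes E :: "'m::finite \<Rightarrow> 'm \<Rightarrow> bool"
    and P :: "real^'m^'m"
    and f :: "'m \<Rightarrow> real^'n::finite \<Rightarrow> ereal"
    and xs nus :: "'m \<Rightarrow> real^'n"
    and mu p M0 rho tau gamma :: real
    and delta :: "'m \<Rightarrow> real"
    and y x nu :: "nat \<Rightarrow> 'm \<Rightarrow> real^'n"
    and T :: nat
  assumes m2: "CARD('m) \<ge> 2"
    and graph: "undirected_graph E" "connected_graph E"
    and f_cpc: "\<And>i. closed_fun (f i) \<and> proper_fun (f i) \<and> convex_fun (f i)"
    and kkt: "\<And>i. (\<Sum>j\<in>UNIV. P$i$j *\<^sub>R xs j) = xs i"
             "\<And>i. \<exists>g\<in>normal_cone prob_simplex (xs i).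
                      - nus i + (\<Sum>j\<in>UNIV. P$i$j *\<^sub>R nus j) - g \<in> subdiff (f i) (xs i)"
    and breg_sc: "mu > 0" "p \<ge> 1"
      "\<And>u v :: real^'n. u \<in> prob_simplex \<inter> posorth \<Longrightarrow> v \<in> prob_simplex \<inter> posorth \<Longrightarrow>
               bregman u v \<ge> mu / 2 * (pnorm p (u - v))\<^sup>2"
    and P_props: "symmetric_mat P" "stochastic_mat P" "irreducible_mat P" "psd_mat P"
      "\<And>i j. P$i$j > 0 \<Longrightarrow> j = i \<or> j \<in> neighbors E i"
    and M0: "M0 \<ge> 0" "\<And>i g. g \<in> subdiff (f i) (xs i) \<Longrightarrow> (norm g)\<^sup>2 \<le> M0"
    and params: "rho > 0" "tau = rho / 2" "gamma = 1/4" "\<And>i. delta i \<ge> 0"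
    and init: "nu 0 = (\<lambda>i. 0)" "x 0 = (\<lambda>i. \<chi> k. 1 / real CARD('n))"
    and y_step: "\<And>t i. y t i \<in> prob_simplex \<and>
        (\<forall>z\<in>prob_simplex. (\<Sum>j\<in>UNIV. P$i$j * bregman (y t i) (x t j))
                      \<le> (\<Sum>j\<in>UNIV. P$i$j * bregman z (x t j)))"
    and x_step: "\<And>t i. x (Suc t) i \<in> prob_simplex \<and>
        (\<forall>z\<in>prob_simplex.
           f i (x (Suc t) i) + ereal (x (Suc t) i \<bullet> (nu t i - (\<Sum>j\<in>UNIV. P$i$j *\<^sub>R nu t j))
              + rho * bregman (x (Suc t) i) (y t i) + delta i * bregman (x (Suc t) i) (x t i))
           \<le> f i z + ereal (z \<bullet> (nu t i - (\<Sum>j\<in>UNIV. P$i$j *\<^sub>R nu t j))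
              + rho * bregman z (y t i) + delta i * bregman z (x t i)))"
    and nu_step: "\<And>t i. nu (Suc t) i = nu t i + tau *\<^sub>R x (Suc t) i
                           - tau *\<^sub>R (\<Sum>j\<in>UNIV. P$i$j *\<^sub>R x (Suc t) j)"
    and T: "T \<ge> 1"
  shows
    "let xbar = (\<lambda>i. (1 / real T) *\<^sub>R (\<Sum>t=1..T. x t i));
         dmax = Max (range delta); m = real CARD('m); n = real CARD('n)
     in (\<Sum>i\<in>UNIV. f i (xbar i)) - (\<Sum>i\<in>UNIV. f i (xs i))
          \<le> ereal (m * (rho + dmax) * ln n / real T)
      \<and> 1/2 * (\<Sum>i\<in>UNIV. (norm (xbar i - (\<Sum>j\<in>UNIV. P$i$j *\<^sub>R xbar j)))\<^sup>2)
          \<le> 4 * m * M0 / (rho\<^sup>2 * (1 - lambda2 P)\<^sup>2 * real T)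
            + 4 * m * (rho + dmax) * ln n / (rho * real T)"
proof -
  note sym = P_props(1) and st = P_props(2) and irr = P_props(3) and psd = P_props(4)
  obtain g where g: "\<And>i. g i \<in> normal_cone prob_simplex (xs i)"
    and hsub: "\<And>i. - nus i + (\<Sum>j\<in>UNIV. P$i$j *\<^sub>R nus j) - g i \<in> subdiff (f i) (xs i)"
    using kkt(2) by metis
  define c where "c = xs undefined"
  have xs_c: "xs i = c" for i unfolding c_def by (rule consensus_of_mix_fixpoint[OF st irr kkt(1)])
  have cS: "c \<in> prob_simplex" using g[of undefined] by (auto simp: xs_c normal_cone_def split: if_splits)
  have "bounded (subdiff (f i) c)" for i
    using M0(2)[where i = i] unfolding bounded_iff xs_c by (metis real_le_rsqrt)
  then have dom: "\<exists>w \<in> prob_simplex \<inter> posorth. f i w \<noteq> \<infinity>" for i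
    using hsub[of i] f_cpc[of i] by (intro dom_meets_pos_simplex[OF _ cS]) (auto simp: xs_c)
  interpret entropic_consensus P f rho tau delta x y nu
    using sym st psd f_cpc dom params init y_step x_step nu_step by unfold_locales auto
  have g': "g i \<in> normal_cone prob_simplex c"
    and h': "- nus i + (\<Sum>j\<in>UNIV. P$i$j *\<^sub>R nus j) - g i \<in> subdiff (f i) c"
    and M0': "\<forall>g\<in>subdiff (f i) c. (norm g)^2 \<le> M0" for i
    using g[of i] hsub[of i] M0(2)[where i = i] by (simp_all add: xs_c)
  obtain V0 where "((1 - lambda2 P) * norm V0)^2 \<le> real CARD('m) * M0"
    and "\<And>Y. (\<And>i. Y$i \<in> prob_simplex) \<Longrightarrow> (\<And>i. f i (Y$i) \<noteq> \<infinity>) \<Longrightarrow>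
           - ((Y - mix P Y) \<bullet> V0) \<le> (\<Sum>i\<in>UNIV. F i (Y$i) - F i c)"
    using kkt_dual_certificate[OF sym st irr psd m2 g' h' M0'] unfolding F_def by blast
  moreover have "f i c \<noteq> \<infinity>" for i
    using subdiff_imp_finite[OF h'[of i]] by (metis PInfty_neq_ereal(1))
  ultimately show ?thesis
    using ergodic_rates[OF cS _ T lambda2_lt_1[OF sym st irr psd m2] M0(1)]
    by (simp add: Let_def Xbar_nth xs_c)
qed

end
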